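(* Let $\lambda\vdash n$ with $n\ge 4$, let $\chi_\lambda$ be the character of the Specht module of $S_n$ indexed by $\lambda$, and put $g_\lambda=\frac{\chi_\lambda(1)-\chi_\lambda(s_1)}{2}$ and $h_\lambda=\frac{\chi_\lambda(1)-\chi_\lambda(s_1s_3)}{2}$, where $s_1=(1,2)$, $s_3=(3,4)$. Then \begin{enumerate} \item $g_\lambda=f_{\lambda/(1,1)}$, and \item $h_\lambda=2\,(f_{\lambda/(3,1)}+f_{\lambda/(2,1,1)})$. \end{enumerate}
   Context: For partitions $\mu,\lambda$, $f_{\lambda/\mu}$ denotes the number of standard Young tableaux of the skew shape $\lambda/\mu$ when the Young diagram of $\mu$ is contained in that of $\lambda$, and $f_{\lambda/\mu}=0$ otherwise. *)

theory Defs
  imports Complex_Main "HOL-Library.FuncSet" "HOL-Combinatorics.Permutations"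
begin

definition is_partition :: "nat \<Rightarrow> nat list \<Rightarrow> bool" where
  "is_partition n lam \<longleftrightarrow> sorted_wrt (\<ge>) lam \<and> 0 \<notin> set lam \<and> sum_list lam = n"

text \<open>Young diagram, cells (row, column), both 0-based.\<close>
definition cells :: "nat list \<Rightarrow> (nat \<times> nat) set" where
  "cells lam = {(i, j). i < length lam \<and> j < lam ! i}"

definition standard_fillings :: "(nat \<times> nat) set \<Rightarrow> ((nat \<times> nat) \<Rightarrow> nat) set" where
  "standard_fillings S = {T. T \<in> extensional S \<and> bij_betw T S {1..card S}
      \<and> (\<forall>i j j'. (i, j) \<in> S \<longrightarrow> (i, j') \<in> S \<longrightarrow> j < j' \<longrightarrow> T (i, j) < T (i, j'))
      \<and> (\<forall>i i' j. (i, j) \<in> S \<longrightarrow> (i', j) \<in> S \<longrightarrow> i < i' \<longrightarrow> T (i, j) < T (i', j))}"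

definition f_skew :: "nat list \<Rightarrow> nat list \<Rightarrow> nat" where
  "f_skew lam mu = (if cells mu \<subseteq> cells lam
                    then card (standard_fillings (cells lam - cells mu)) else 0)"

definition tableaux :: "nat \<Rightarrow> nat list \<Rightarrow> ((nat \<times> nat) \<Rightarrow> nat) set" where
  "tableaux n lam = {t. t \<in> extensional (cells lam) \<and> bij_betw t (cells lam) {1..n}}"

definition cell_of :: "nat list \<Rightarrow> ((nat \<times> nat) \<Rightarrow> nat) \<Rightarrow> nat \<Rightarrow> nat \<times> nat" where
  "cell_of lam t k = the_inv_into (cells lam) t k"

text \<open>The tabloid {t}, represented canonically by the row function of its entries.\<close>
definition tabloid :: "nat \<Rightarrow> nat list \<Rightarrow> ((nat \<times> nat) \<Rightarrow> nat) \<Rightarrow> (nat \<Rightarrow> nat)" where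
  "tabloid n lam t = (\<lambda>k. if k \<in> {1..n} then fst (cell_of lam t k) else 0)"

definition col_stab :: "nat \<Rightarrow> nat list \<Rightarrow> ((nat \<times> nat) \<Rightarrow> nat) \<Rightarrow> (nat \<Rightarrow> nat) set" where
  "col_stab n lam t = {p. p permutes {1..n} \<and>
      (\<forall>k\<in>{1..n}. snd (cell_of lam t (p k)) = snd (cell_of lam t k))}"

text \<open>Vectors of the permutation module M^lam: real functions on tabloids.
  The polytabloid e_t = sum over p in C_t of sgn(p) {p t}.\<close>
definition polytabloid :: "nat \<Rightarrow> nat list \<Rightarrow> ((nat \<times> nat) \<Rightarrow> nat) \<Rightarrow> (nat \<Rightarrow> nat) \<Rightarrow> real" where
  "polytabloid n lam t = (\<lambda>R. \<Sum>p\<in>col_stab n lam t.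
       of_int (sign p) * (if tabloid n lam (p \<circ> t) = R then 1 else 0))"

text \<open>Action of a permutation s on M^lam: s.{t} = {s t}, i.e. (s.v)(R) = v(R o s).\<close>
definition perm_act :: "(nat \<Rightarrow> nat) \<Rightarrow> ((nat \<Rightarrow> nat) \<Rightarrow> real) \<Rightarrow> ((nat \<Rightarrow> nat) \<Rightarrow> real)" where
  "perm_act s v = (\<lambda>R. v (R \<circ> s))"

definition specht :: "nat \<Rightarrow> nat list \<Rightarrow> ((nat \<Rightarrow> nat) \<Rightarrow> real) set" where
  "specht n lam = {v. \<exists>c. \<forall>R. v R = (\<Sum>t\<in>tableaux n lam. c t * polytabloid n lam t R)}"

definition lin_indep :: "((nat \<Rightarrow> nat) \<Rightarrow> real) set \<Rightarrow> bool" where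
  "lin_indep B \<longleftrightarrow> (\<forall>c. (\<forall>R. (\<Sum>b\<in>B. c b * b R) = 0) \<longrightarrow> (\<forall>b\<in>B. c b = 0))"

definition is_basis_of :: "((nat \<Rightarrow> nat) \<Rightarrow> real) set \<Rightarrow> ((nat \<Rightarrow> nat) \<Rightarrow> real) set \<Rightarrow> bool" where
  "is_basis_of B V \<longleftrightarrow> finite B \<and> B \<subseteq> V \<and> lin_indep B \<and>
     (\<forall>v\<in>V. \<exists>c. \<forall>R. v R = (\<Sum>b\<in>B. c b * b R))"

definition coord :: "((nat \<Rightarrow> nat) \<Rightarrow> real) set \<Rightarrow> ((nat \<Rightarrow> nat) \<Rightarrow> real)
                     \<Rightarrow> ((nat \<Rightarrow> nat) \<Rightarrow> real) \<Rightarrow> real" where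
  "coord B v = (THE c. c \<in> extensional B \<and> (\<forall>R. v R = (\<Sum>b\<in>B. c b * b R)))"

definition specht_char :: "nat \<Rightarrow> nat list \<Rightarrow> (nat \<Rightarrow> nat) \<Rightarrow> real" where
  "specht_char n lam s = (let B = (SOME B. is_basis_of B (specht n lam))
                          in \<Sum>b\<in>B. coord B (perm_act s b) b)"

definition s1 :: "nat \<Rightarrow> nat" where
  "s1 = (\<lambda>k. if k = 1 then 2 else if k = 2 then 1 else k)"
definition s3 :: "nat \<Rightarrow> nat" where
  "s3 = (\<lambda>k. if k = 3 then 4 else if k = 4 then 3 else k)"

end

theory Submission
  imports Defs "HOL-Library.Function_Algebras" "HOL-Library.List_Lexorder"
begin

lemma finite_cells[simp]: "finite (cells lam)"
proof -
  have "cells lam \<subseteq> {..<length lam} \<times> {..<Max (insert 0 (set lam))}"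
  proof
    fix x assume "x \<in> cells lam"
    then obtain i j where x: "x = (i,j)" "i < length lam" "j < lam ! i" by (auto simp: cells_def)
    have "lam ! i \<le> Max (insert 0 (set lam))" using x(2) by (intro Max_ge) auto
    thus "x \<in> {..<length lam} \<times> {..<Max (insert 0 (set lam))}" using x by (auto intro: less_le_trans)
  qed
  thus ?thesis by (rule finite_subset) auto
qed

lemma cells_Cons: "cells (a # lam) = {0} \<times> {..<a} \<union> (\<lambda>(i,j). (Suc i, j)) ` cells lam"
proof -
  have "x \<in> cells (a # lam) \<longleftrightarrow> x \<in> {0} \<times> {..<a} \<union> (\<lambda>(i,j). (Suc i, j)) ` cells lam" for x
  proof (cases x)
    case (Pair i j) then show ?thesis
      by (cases i) (auto simp: cells_def image_iff)
  qed
  thus ?thesis by blast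
qed

lemma card_cells: "card (cells lam) = sum_list lam"
proof (induction lam)
  case Nil then show ?case by (simp add: cells_def)
next
  case (Cons a lam)
  have inj: "inj (\<lambda>(i::nat,j::nat). (Suc i, j))" by (auto simp: inj_def)
  have "card (cells (a # lam)) = card ({0} \<times> {..<a}) + card ((\<lambda>(i,j). (Suc i, j)) ` cells lam)"
    unfolding cells_Cons by (subst card_Un_disjoint) auto
  also have "card ((\<lambda>(i,j). (Suc i, j)) ` cells lam) = card (cells lam)"
    by (rule card_image) (use inj in \<open>auto simp: inj_on_def\<close>)
  finally show ?case using Cons by simp
qed
definition lex_code :: "nat \<Rightarrow> (nat \<Rightarrow> nat) \<Rightarrow> nat" where
  "lex_code n f = (\<Sum>k\<in>{1..n}. f k * (n+1)^(n-k))"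

lemma lex_code_tail_less:
  fixes d :: "nat \<Rightarrow> nat" and N :: nat
  assumes "\<And>k. a < k \<Longrightarrow> k \<le> m \<Longrightarrow> d k < N" "a \<le> m"
  shows "(\<Sum>k\<in>{a<..m}. d k * N^(m-k)) < N^(m-a)"
  using assms
proof (induction m)
  case 0 then show ?case by simp
next
  case (Suc m)
  show ?case
  proof (cases "a = Suc m")
    case True then show ?thesis by simp
  next
    case False
    with Suc.prems have am: "a \<le> m" by simp
    have IH: "(\<Sum>k\<in>{a<..m}. d k * N^(m-k)) < N^(m-a)" using Suc.IH[OF _ am] Suc.prems(1) by simp
    have split: "{a<..Suc m} = insert (Suc m) {a<..m}" using am by auto
    have "(\<Sum>k\<in>{a<..Suc m}. d k * N^(Suc m-k)) = d (Suc m) + (\<Sum>k\<in>{a<..m}. d k * N^(Suc m-k))"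
      unfolding split by (subst sum.insert) auto
    also have "(\<Sum>k\<in>{a<..m}. d k * N^(Suc m-k)) = N * (\<Sum>k\<in>{a<..m}. d k * N^(m-k))"
      by (subst sum_distrib_left, rule sum.cong) (auto simp: Suc_diff_le)
    finally have eq: "(\<Sum>k\<in>{a<..Suc m}. d k * N^(Suc m-k)) = d (Suc m) + N * (\<Sum>k\<in>{a<..m}. d k * N^(m-k))" .
    have dS: "d (Suc m) < N" using Suc.prems(1) am by auto
    have "(\<Sum>k\<in>{a<..m}. d k * N^(m-k)) + 1 \<le> N^(m-a)" using IH by simp
    then have "N * ((\<Sum>k\<in>{a<..m}. d k * N^(m-k)) + 1) \<le> N * N^(m-a)" by (rule mult_le_mono2)
    then have "N * (\<Sum>k\<in>{a<..m}. d k * N^(m-k)) + N \<le> N^(Suc m - a)"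
      using am by (simp add: Suc_diff_le algebra_simps)
    then show ?thesis unfolding eq using dS by linarith
  qed
qed

lemma lex_code_less:
  assumes dig: "\<And>k. k \<in> {1..n} \<Longrightarrow> f k \<le> n"
    and k0: "k0 \<in> {1..n}" and eq: "\<And>k. k \<in> {1..n} \<Longrightarrow> k < k0 \<Longrightarrow> f k = g k"
    and lt: "f k0 < g k0"
  shows "lex_code n f < lex_code n g"
proof -
  let ?N = "n+1"
  have split: "{1..n} = {1..<k0} \<union> {k0} \<union> {k0<..n}" using k0 by auto
  have key_split: "lex_code n h = (\<Sum>k\<in>{1..<k0}. h k * ?N^(n-k)) + h k0 * ?N^(n-k0) + (\<Sum>k\<in>{k0<..n}. h k * ?N^(n-k))" for h
    unfolding lex_code_def split by (subst sum.union_disjoint, auto)+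
  have t: "(\<Sum>k\<in>{k0<..n}. f k * ?N^(n-k)) < ?N^(n-k0)"
  proof (rule lex_code_tail_less)
    fix k assume "k0 < k" "k \<le> n"
    then have "k \<in> {1..n}" using k0 by auto
    then show "f k < n + 1" using dig by (simp add: le_imp_less_Suc)
  qed (use k0 in auto)
  have s: "(\<Sum>k\<in>{1..<k0}. f k * ?N^(n-k)) = (\<Sum>k\<in>{1..<k0}. g k * ?N^(n-k))"
    by (rule sum.cong) (use eq k0 in auto)
  have "(f k0 + 1) * ?N^(n-k0) \<le> g k0 * ?N^(n-k0)"
    using lt by (intro mult_le_mono1) simp
  then have "f k0 * ?N^(n-k0) + ?N^(n-k0) \<le> g k0 * ?N^(n-k0)" by (simp add: algebra_simps)
  then show ?thesis unfolding key_split[of f] key_split[of g] s using t by linarith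
qed

lemma lex_code_inj:
  assumes "\<And>k. k \<in> {1..n} \<Longrightarrow> f k \<le> n" "\<And>k. k \<in> {1..n} \<Longrightarrow> g k \<le> n"
    "lex_code n f = lex_code n g"
  shows "\<forall>k\<in>{1..n}. f k = g k"
proof (rule ccontr)
  assume "\<not> ?thesis"
  then have ex: "\<exists>k. k \<in> {1..n} \<and> f k \<noteq> g k" by blast
  define k0 where "k0 = (LEAST k. k \<in> {1..n} \<and> f k \<noteq> g k)"
  have k0: "k0 \<in> {1..n}" "f k0 \<noteq> g k0" using LeastI_ex[OF ex] unfolding k0_def by auto
  have eq: "f k = g k" if "k \<in> {1..n}" "k < k0" for k
    using not_less_Least[of k "\<lambda>k. k \<in> {1..n} \<and> f k \<noteq> g k"] that unfolding k0_def by auto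
  show False
  proof (cases "f k0 < g k0")
    case True
    from lex_code_less[of n f k0 g, OF assms(1) k0(1) eq True] assms(3) show False by simp
  next
    case False
    with k0 have "g k0 < f k0" by simp
    have "lex_code n g < lex_code n f"
      by (rule lex_code_less[of n g k0 f, OF assms(2) k0(1) _ \<open>g k0 < f k0\<close>]) (use eq in auto)
    with assms(3) show False by simp
  qed
qed

lemma sum_fun_apply: "(sum f A) x = sum (\<lambda>a. f a x) A"
  by (induction A rule: infinite_finite_induct) auto

interpretation fun_vs: vector_space "(\<lambda>(r::real) (f::(nat\<Rightarrow>nat)\<Rightarrow>real) x. r * f x)"
  by unfold_locales (auto simp: fun_eq_iff algebra_simps)

lemma sign_sq: "of_int (sign p) * of_int (sign p) = (1::real)"
  by (simp add: sign_def)

locale partition_shape =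
  fixes n :: nat and lam :: "nat list"
  assumes part: "is_partition n lam"
begin

abbreviation "Y \<equiv> cells lam"
abbreviation "T \<equiv> tableaux n lam"
abbreviation "e \<equiv> polytabloid n lam"
abbreviation "tab \<equiv> tabloid n lam"
abbreviation "CS \<equiv> col_stab n lam"
abbreviation "cell \<equiv> cell_of lam"

definition row :: "((nat \<times> nat) \<Rightarrow> nat) \<Rightarrow> nat \<Rightarrow> nat" where "row t k = fst (cell t k)"
definition col :: "((nat \<times> nat) \<Rightarrow> nat) \<Rightarrow> nat \<Rightarrow> nat" where "col t k = snd (cell t k)"

definition col_increasing :: "((nat \<times> nat) \<Rightarrow> nat) \<Rightarrow> bool" where
  "col_increasing t \<longleftrightarrow> (\<forall>i i' j. (i,j) \<in> Y \<longrightarrow> (i',j) \<in> Y \<longrightarrow> i < i' \<longrightarrow> t (i,j) < t (i',j))"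
definition row_increasing :: "((nat \<times> nat) \<Rightarrow> nat) \<Rightarrow> bool" where
  "row_increasing t \<longleftrightarrow> (\<forall>i j j'. (i,j) \<in> Y \<longrightarrow> (i,j') \<in> Y \<longrightarrow> j < j' \<longrightarrow> t (i,j) < t (i,j'))"

definition col_code :: "((nat \<times> nat) \<Rightarrow> nat) \<Rightarrow> nat" where
  "col_code t = lex_code n (\<lambda>k. if k \<in> {1..n} then col t k else 0)"

definition SYT where "SYT = {t \<in> T. col_increasing t \<and> row_increasing t}"

lemma card_diagram: "card Y = n"
  using part by (simp add: card_cells is_partition_def)

lemma diagram_down_closed:
  assumes "(i,j) \<in> Y" "i' \<le> i" "j' \<le> j" shows "(i',j') \<in> Y"
proof -
  have s: "sorted_wrt (\<ge>) lam" using part by (simp add: is_partition_def)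
  from assms have i: "i < length lam" "j < lam ! i" by (auto simp: cells_def)
  have "lam ! i \<le> lam ! i'"
  proof (cases "i' = i")
    case False
    with assms(2) have "i' < i" by simp
    with s i show ?thesis by (auto simp: sorted_wrt_iff_nth_less)
  qed simp
  with assms i show ?thesis by (auto simp: cells_def)
qed

lemma tableauD: assumes "t \<in> T" shows "bij_betw t Y {1..n}" "t \<in> extensional Y"
  using assms by (auto simp: tableaux_def)

lemma cell_in: assumes "t \<in> T" "k \<in> {1..n}" shows "cell t k \<in> Y" "t (cell t k) = k"
proof -
  have b: "inj_on t Y" "t ` Y = {1..n}" using tableauD(1)[OF assms(1)] by (auto simp: bij_betw_def)
  show "cell t k \<in> Y" unfolding cell_of_def by (rule the_inv_into_into[OF b(1)]) (use assms b in auto)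
  show "t (cell t k) = k" unfolding cell_of_def by (rule f_the_inv_into_f[OF b(1)]) (use assms b in auto)
qed

lemma cell_tableau: assumes "t \<in> T" "x \<in> Y" shows "cell t (t x) = x"
proof -
  have b: "inj_on t Y" using tableauD(1)[OF assms(1)] by (auto simp: bij_betw_def)
  show ?thesis unfolding cell_of_def by (rule the_inv_into_f_f[OF b assms(2)])
qed

lemma tableau_in_range: assumes "t \<in> T" "x \<in> Y" shows "t x \<in> {1..n}"
  using assms(2) tableauD(1)[OF assms(1)] by (auto simp: bij_betw_def)

lemma tableau_inj: assumes "t \<in> T" "x \<in> Y" "y \<in> Y" "t x = t y" shows "x = y"
  using assms(2-4) tableauD(1)[OF assms(1)] unfolding bij_betw_def inj_on_def by blast

lemma cell_restrict: "cell (restrict f Y) = cell f"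
proof (rule ext)
  fix y show "cell (restrict f Y) y = cell f y"
    unfolding cell_of_def the_inv_into_def by (rule arg_cong[where f=The]) auto
qed

lemma cell_cong: "(\<And>x. x \<in> Y \<Longrightarrow> f x = g x) \<Longrightarrow> cell f = cell g"
proof (rule ext)
  fix y assume "\<And>x. x \<in> Y \<Longrightarrow> f x = g x"
  then show "cell f y = cell g y"
    unfolding cell_of_def the_inv_into_def by (intro arg_cong[where f=The]) auto
qed

lemma length_le: "length lam \<le> n"
proof -
  have "0 \<notin> set lam" "sum_list lam = n" using part by (auto simp: is_partition_def)
  then show ?thesis
  proof (induction lam arbitrary: n)
    case (Cons a l) then show ?case by (cases a) force+
  qed simp
qed

lemma diagram_bound: "x \<in> Y \<Longrightarrow> fst x < n \<and> snd x < n"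
proof -
  assume x: "x \<in> Y"
  then have "fst x < length lam" "snd x < lam ! fst x" by (auto simp: cells_def)
  moreover have "lam ! fst x \<le> sum_list lam" using \<open>fst x < length lam\<close>
    by (metis elem_le_sum_list)
  ultimately show ?thesis using length_le part by (auto simp: is_partition_def)
qed

lemma tab_eq_row: "tab t = (\<lambda>k. if k \<in> {1..n} then row t k else 0)"
  unfolding tabloid_def row_def by simp

lemma tab_le: "t \<in> T \<Longrightarrow> k \<in> {1..n} \<Longrightarrow> tab t k \<le> n"
  using diagram_bound[OF cell_in(1)] by (fastforce simp: tab_eq_row row_def)

lemma cell_eqI: assumes "t \<in> T" "x \<in> Y" "t x = k" shows "cell t k = x"
  using cell_tableau[OF assms(1,2)] assms(3) by simp

lemma restrict_perm_tableau:
  assumes t: "t \<in> T" and s: "s permutes {1..n}"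
  shows "restrict (s \<circ> t) Y \<in> T"
proof -
  have "bij_betw (s \<circ> t) Y {1..n}"
    by (rule bij_betw_trans[OF tableauD(1)[OF t] permutes_imp_bij[OF s]])
  then have "bij_betw (restrict (s \<circ> t) Y) Y {1..n}"
    by (rule bij_betw_cong[THEN iffD1, rotated]) auto
  then show ?thesis by (auto simp: tableaux_def)
qed

lemma cell_perm:
  assumes t: "t \<in> T" and s: "s permutes {1..n}" and k: "k \<in> {1..n}"
  shows "cell (s \<circ> t) k = cell t (inv s k)"
proof -
  have ik: "inv s k \<in> {1..n}" using permutes_in_image[OF permutes_inv[OF s], THEN iffD2, OF k] .
  have "cell (restrict (s \<circ> t) Y) k = cell t (inv s k)"
    by (rule cell_eqI[OF restrict_perm_tableau[OF t s] cell_in(1)[OF t ik]])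
       (use cell_in(1,2)[OF t ik] permutes_inverses(1)[OF s] in auto)
  then show ?thesis by (simp add: cell_restrict)
qed

lemma tab_perm:
  assumes t: "t \<in> T" and s: "s permutes {1..n}"
  shows "tab (s \<circ> t) = tab t \<circ> inv s"
proof (rule ext)
  fix k
  show "tab (s \<circ> t) k = (tab t \<circ> inv s) k"
  proof (cases "k \<in> {1..n}")
    case True
    have "inv s k \<in> {1..n}" using permutes_in_image[OF permutes_inv[OF s], THEN iffD2, OF True] .
    then show ?thesis using True cell_perm[OF t s True] by (simp add: tabloid_def)
  next
    case False
    then have "inv s k = k" using permutes_inv[OF s] by (simp add: permutes_not_in)
    then show ?thesis using False by (auto simp: tabloid_def)
  qed
qed

lemma col_perm:
  assumes t: "t \<in> T" and s: "s permutes {1..n}" and k: "k \<in> {1..n}"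
  shows "col (s \<circ> t) k = col t (inv s k)"
  using cell_perm[OF assms] by (simp add: col_def)

lemma row_perm:
  assumes t: "t \<in> T" and s: "s permutes {1..n}" and k: "k \<in> {1..n}"
  shows "row (s \<circ> t) k = row t (inv s k)"
  using cell_perm[OF assms] by (simp add: row_def)

lemma CS_altdef: "CS t = {p. p permutes {1..n} \<and> (\<forall>k\<in>{1..n}. col t (p k) = col t k)}"
  by (simp add: col_stab_def col_def)

lemma finite_CS: "finite (CS t)"
  by (rule finite_subset[of _ "{p. p permutes {1..n}}"]) (auto simp: CS_altdef finite_permutations)

lemma CS_id: "id \<in> CS t" by (simp add: CS_altdef permutes_id)

lemma CS_comp: assumes "p \<in> CS t" "q \<in> CS t" shows "p \<circ> q \<in> CS t"
proof -
  have p: "p permutes {1..n}" "\<forall>k\<in>{1..n}. col t (p k) = col t k"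
   and q: "q permutes {1..n}" "\<forall>k\<in>{1..n}. col t (q k) = col t k" using assms by (auto simp: CS_altdef)
  have "col t (p (q k)) = col t k" if k: "k \<in> {1..n}" for k
    using p(2) q(2) permutes_in_image[OF q(1), THEN iffD2, OF k] k by metis
  then show ?thesis using permutes_compose[OF q(1) p(1)] by (simp add: CS_altdef)
qed

lemma CS_inv: assumes "p \<in> CS t" shows "inv p \<in> CS t"
proof -
  have p: "p permutes {1..n}" using assms by (simp add: CS_altdef)
  have "col t (inv p k) = col t k" if k: "k \<in> {1..n}" for k
  proof -
    have "inv p k \<in> {1..n}" using permutes_in_image[OF permutes_inv[OF p], THEN iffD2, OF k] .
    then have "col t (p (inv p k)) = col t (inv p k)" using assms by (simp add: CS_altdef)
    then show ?thesis using permutes_inverses(1)[OF p] by simp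
  qed
  then show ?thesis using permutes_inv[OF p] by (simp add: CS_altdef)
qed

lemma e_restrict: "e (restrict f Y) = e f"
proof -
  have cc: "cell (p \<circ> restrict f Y) = cell (p \<circ> f)" for p by (rule cell_cong) auto
  show ?thesis
    unfolding polytabloid_def col_stab_def tabloid_def cell_restrict cc by simp
qed

lemma e_comp_expand:
  assumes t: "t \<in> T" and s: "s permutes {1..n}"
  shows "e (s \<circ> t) R = (\<Sum>p\<in>CS t. of_int (sign p) * (if tab (s \<circ> p \<circ> t) = R then 1 else 0))"
proof -
  have si: "inv s permutes {1..n}" using permutes_inv[OF s] .
  have mem: "inv s \<circ> p' \<circ> s \<in> CS t \<longleftrightarrow> p' \<in> CS (s \<circ> t)" for p'
  proof -
    have A: "(\<forall>k\<in>{1..n}. col t (inv s (p' (s k))) = col t k) \<longleftrightarrow>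
             (\<forall>k\<in>{1..n}. col (s \<circ> t) (p' k) = col (s \<circ> t) k)" if p': "p' permutes {1..n}"
    proof -
      have "(\<forall>k\<in>{1..n}. col (s \<circ> t) (p' k) = col (s \<circ> t) k) \<longleftrightarrow>
            (\<forall>k\<in>{1..n}. col t (inv s (p' k)) = col t (inv s k))"
        using col_perm[OF t s] permutes_in_image[OF p'] by auto
      also have "\<dots> \<longleftrightarrow> (\<forall>k\<in>{1..n}. col t (inv s (p' (s k))) = col t (inv s (s k)))"
        by (metis (no_types, lifting) permutes_in_image permutes_inverses(1) s si)
      also have "\<dots> \<longleftrightarrow> (\<forall>k\<in>{1..n}. col t (inv s (p' (s k))) = col t k)"
        using permutes_inverses(2)[OF s] by simp
      finally show ?thesis by simp
    qed
    have B: "inv s \<circ> p' \<circ> s permutes {1..n} \<longleftrightarrow> p' permutes {1..n}"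
    proof
      assume "p' permutes {1..n}" then show "inv s \<circ> p' \<circ> s permutes {1..n}"
        by (intro permutes_compose s si)
    next
      assume "inv s \<circ> p' \<circ> s permutes {1..n}"
      then have "s \<circ> (inv s \<circ> p' \<circ> s) \<circ> inv s permutes {1..n}"
        using permutes_compose[OF si permutes_compose[OF _ s]] by blast
      moreover have "s \<circ> (inv s \<circ> p' \<circ> s) \<circ> inv s = p'"
        using permutes_inverses[OF s] by (auto simp: fun_eq_iff)
      ultimately show "p' permutes {1..n}" by simp
    qed
    show ?thesis using A B by (auto simp: CS_altdef)
  qed
  have "e (s \<circ> t) R = (\<Sum>p'\<in>CS (s \<circ> t). of_int (sign p') * (if tab (p' \<circ> (s \<circ> t)) = R then 1 else 0))"
    by (simp add: polytabloid_def)
  also have "\<dots> = (\<Sum>p\<in>CS t. of_int (sign p) * (if tab (s \<circ> p \<circ> t) = R then 1 else 0))"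
  proof (rule sum.reindex_bij_witness[where j = "\<lambda>p'. inv s \<circ> p' \<circ> s" and i = "\<lambda>p. s \<circ> p \<circ> inv s"])
    fix p assume p: "p \<in> CS t"
    show "inv s \<circ> (s \<circ> p \<circ> inv s) \<circ> s = p" using permutes_inverses[OF s] by (auto simp: fun_eq_iff)
    show "s \<circ> p \<circ> inv s \<in> CS (s \<circ> t)"
      using mem[of "s \<circ> p \<circ> inv s"] p permutes_inverses[OF s] by (simp add: fun_eq_iff comp_def)
  next
    fix p' assume p': "p' \<in> CS (s \<circ> t)"
    show "s \<circ> (inv s \<circ> p' \<circ> s) \<circ> inv s = p'" using permutes_inverses[OF s] by (auto simp: fun_eq_iff)
    show "inv s \<circ> p' \<circ> s \<in> CS t" using mem p' by simp
    have pp: "p' permutes {1..n}" using p' by (simp add: CS_altdef)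
    have "sign (inv s \<circ> p' \<circ> s) = sign p'"
      by (simp add: sign_compose permutation_compose permutes_imp_permutation[OF _ s]
            permutes_imp_permutation[OF _ si] permutes_imp_permutation[OF _ pp] sign_inverse)
    moreover have "s \<circ> (inv s \<circ> p' \<circ> s) \<circ> t = p' \<circ> (s \<circ> t)"
      using permutes_inverses[OF s] by (auto simp: fun_eq_iff)
    ultimately show "of_int (sign (inv s \<circ> p' \<circ> s)) * (if tab (s \<circ> (inv s \<circ> p' \<circ> s) \<circ> t) = R then 1 else 0) =
          (of_int (sign p') * (if tab (p' \<circ> (s \<circ> t)) = R then 1 else 0) :: real)" by simp
  qed
  finally show ?thesis .
qed

lemma perm_in_range: "s permutes {1..n} \<Longrightarrow> k \<in> {1..n} \<Longrightarrow> s k \<in> {1..n}"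
  by (rule permutes_in_image[THEN iffD2])

lemma inv_perm_in_range: "s permutes {1..n} \<Longrightarrow> k \<in> {1..n} \<Longrightarrow> inv s k \<in> {1..n}"
  by (rule permutes_in_image[OF permutes_inv, THEN iffD2])

lemma tab_comp_perm:
  assumes t: "t \<in> T" and s: "s permutes {1..n}" and p: "p permutes {1..n}"
  shows "tab (s \<circ> p \<circ> t) = tab (p \<circ> t) \<circ> inv s"
proof -
  have sp: "s \<circ> p permutes {1..n}" using permutes_compose[OF p s] .
  have "tab (s \<circ> p \<circ> t) = tab t \<circ> inv (s \<circ> p)" using tab_perm[OF t sp] .
  also have "inv (s \<circ> p) = inv p \<circ> inv s"
    by (rule o_inv_distrib) (use permutes_bij[OF s] permutes_bij[OF p] in auto)
  finally have "tab (s \<circ> p \<circ> t) = tab t \<circ> (inv p \<circ> inv s)" .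
  also have "\<dots> = (tab t \<circ> inv p) \<circ> inv s" by (rule o_assoc)
  also have "tab t \<circ> inv p = tab (p \<circ> t)" using tab_perm[OF t p] by simp
  finally show ?thesis .
qed

lemma perm_act_polytabloid:
  assumes t: "t \<in> T" and s: "s permutes {1..n}"
  shows "perm_act s (e t) = e (s \<circ> t)"
proof (rule ext)
  fix R
  have eq: "(X \<circ> inv s = R) \<longleftrightarrow> (X = R \<circ> s)" for X :: "nat \<Rightarrow> nat"
  proof
    assume "X \<circ> inv s = R"
    then have "X \<circ> inv s \<circ> s = R \<circ> s" by simp
    then show "X = R \<circ> s" using permutes_inverses(2)[OF s] by (simp add: fun_eq_iff)
  next
    assume "X = R \<circ> s"
    then show "X \<circ> inv s = R" using permutes_inverses(1)[OF s] by (simp add: fun_eq_iff)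
  qed
  have "e (s \<circ> t) R = (\<Sum>p\<in>CS t. of_int (sign p) * (if tab (s \<circ> p \<circ> t) = R then 1 else 0))"
    by (rule e_comp_expand[OF t s])
  also have "\<dots> = (\<Sum>p\<in>CS t. of_int (sign p) * (if tab (p \<circ> t) = R \<circ> s then 1 else 0))"
    by (rule sum.cong[OF refl]) (simp add: tab_comp_perm[OF t s] CS_altdef eq)
  also have "\<dots> = perm_act s (e t) R"
    by (simp add: perm_act_def polytabloid_def)
  finally show "perm_act s (e t) R = e (s \<circ> t) R" by simp
qed

lemma e_col_stab:
  assumes t: "t \<in> T" and q: "q \<in> CS t"
  shows "e (q \<circ> t) R = of_int (sign q) * e t R"
proof -
  have qp: "q permutes {1..n}" using q by (simp add: CS_altdef)
  have "e (q \<circ> t) R = (\<Sum>p\<in>CS t. of_int (sign p) * (if tab (q \<circ> p \<circ> t) = R then 1 else 0))"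
    by (rule e_comp_expand[OF t qp])
  also have "\<dots> = (\<Sum>p\<in>CS t. of_int (sign q) * (of_int (sign p) * (if tab (p \<circ> t) = R then 1 else 0)))"
  proof (rule sum.reindex_bij_witness[where j = "\<lambda>p. q \<circ> p" and i = "\<lambda>p. inv q \<circ> p"])
    fix p assume p: "p \<in> CS t"
    show "inv q \<circ> (q \<circ> p) = p" using permutes_inverses[OF qp] by (auto simp: fun_eq_iff)
    show "q \<circ> p \<in> CS t" by (rule CS_comp[OF q p])
    have pp: "p permutes {1..n}" using p by (simp add: CS_altdef)
    have "sign (q \<circ> p) = sign q * sign p"
      by (simp add: sign_compose permutes_imp_permutation[OF _ qp] permutes_imp_permutation[OF _ pp])
    then show "of_int (sign q) * (of_int (sign (q \<circ> p)) * (if tab (q \<circ> p \<circ> t) = R then 1 else 0)) =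
         (of_int (sign p) * (if tab (q \<circ> p \<circ> t) = R then 1 else 0) :: real)"
      by (simp add: sign_def)
  next
    fix p assume p: "p \<in> CS t"
    show "q \<circ> (inv q \<circ> p) = p" using permutes_inverses[OF qp] by (auto simp: fun_eq_iff)
    show "inv q \<circ> p \<in> CS t" by (rule CS_comp[OF CS_inv[OF q] p])
  qed
  also have "\<dots> = of_int (sign q) * e t R"
    by (simp add: polytabloid_def sum_distrib_left)
  finally show ?thesis .
qed

lemma col_increasing_row_less:
  assumes t: "t \<in> T" and ci: "col_increasing t" and a: "a \<in> {1..n}" and b: "b \<in> {1..n}"
    and c: "col t a = col t b" and ab: "a < b"
  shows "row t a < row t b"
proof (rule ccontr)
  assume "\<not> ?thesis"
  then have le: "row t b \<le> row t a" by simp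
  have ca: "cell t a = (row t a, col t a)" by (simp add: row_def col_def)
  have cb: "cell t b = (row t b, col t b)" by (simp add: row_def col_def)
  then have cb: "cell t b = (row t b, col t a)" using c by simp
  have inC: "(row t a, col t a) \<in> Y" "(row t b, col t a) \<in> Y"
    using cell_in(1)[OF t a] cell_in(1)[OF t b] ca cb by auto
  show False
  proof (cases "row t b = row t a")
    case True
    then have "cell t a = cell t b" using ca cb by simp
    then have "t (cell t a) = t (cell t b)" by simp
    then have "a = b" using cell_in(2)[OF t a] cell_in(2)[OF t b] by simp
    with ab show False by simp
  next
    case False
    with le have "row t b < row t a" by simp
    then have "t (row t b, col t a) < t (row t a, col t a)" using ci inC by (auto simp: col_increasing_def)
    then show False using cell_in(2)[OF t a] cell_in(2)[OF t b] ca cb ab by simp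
  qed
qed

lemma lex_code_tab_col_stab:
  assumes t: "t \<in> T" and ci: "col_increasing t" and p: "p \<in> CS t" and ne: "p \<noteq> id"
  shows "lex_code n (tab t) < lex_code n (tab (p \<circ> t))"
proof -
  have pp: "p permutes {1..n}" using p by (simp add: CS_altdef)
  have ip: "inv p permutes {1..n}" using permutes_inv[OF pp] .
  have ex: "\<exists>k. k \<in> {1..n} \<and> inv p k \<noteq> k"
  proof (rule ccontr)
    assume "\<not> ?thesis"
    then have "inv p x = x" for x using permutes_not_in[OF ip, of x] by blast
    then have "inv p = id" by (simp add: fun_eq_iff)
    then have "p = id" using inv_inv_eq[OF permutes_bij[OF pp]] by simp
    with ne show False by simp
  qed
  define k0 where "k0 = (LEAST k. k \<in> {1..n} \<and> inv p k \<noteq> k)"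
  have k0: "k0 \<in> {1..n}" "inv p k0 \<noteq> k0" using LeastI_ex[OF ex] unfolding k0_def by auto
  have fix0: "inv p k = k" if "k \<in> {1..n}" "k < k0" for k
    using not_less_Least[of k "\<lambda>k. k \<in> {1..n} \<and> inv p k \<noteq> k"] that unfolding k0_def by auto
  define m where "m = inv p k0"
  have m: "m \<in> {1..n}" unfolding m_def by (rule inv_perm_in_range[OF pp k0(1)])
  have "m > k0"
  proof (rule ccontr)
    assume "\<not> m > k0"
    with k0(2) have "m < k0" unfolding m_def by simp
    then have "inv p m = m" using fix0 m by simp
    then have "inv p m = inv p k0" unfolding m_def by simp
    then have "m = k0" using permutes_inj[OF ip] by (simp add: inj_def)
    with \<open>m < k0\<close> show False by simp
  qed
  have "col t (p m) = col t m" using p m by (simp add: CS_altdef)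
  moreover have "p m = k0" unfolding m_def using permutes_inverses(1)[OF pp] by simp
  ultimately have cm: "col t k0 = col t m" by simp
  have rl: "row t k0 < row t m" by (rule col_increasing_row_less[OF t ci k0(1) m cm \<open>m > k0\<close>])
  have tp: "tab (p \<circ> t) = tab t \<circ> inv p" by (rule tab_perm[OF t pp])
  show ?thesis
  proof (rule lex_code_less[of n "tab t" k0])
    show "tab t k \<le> n" if "k \<in> {1..n}" for k using tab_le[OF t that] .
    show "k0 \<in> {1..n}" by (rule k0(1))
    show "tab t k = tab (p \<circ> t) k" if "k \<in> {1..n}" "k < k0" for k
      using fix0[OF that] by (simp add: tp)
    show "tab t k0 < tab (p \<circ> t) k0"
      using rl k0(1) m unfolding tp by (simp add: tab_eq_row m_def)
  qed
qed

lemma polytabloid_leading: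
  assumes t: "t \<in> T" and ci: "col_increasing t"
  shows "e t (tab t) = 1" and "e t R \<noteq> 0 \<Longrightarrow> R = tab t \<or> lex_code n (tab t) < lex_code n R"
proof -
  have "e t (tab t) = (\<Sum>p\<in>CS t. (if p = id then 1 else 0))"
    unfolding polytabloid_def
  proof (rule sum.cong[OF refl])
    fix p assume p: "p \<in> CS t"
    show "of_int (sign p) * (if tab (p \<circ> t) = tab t then 1 else 0) = (if p = id then 1 else (0::real))"
    proof (cases "p = id")
      case False
      then have "tab (p \<circ> t) \<noteq> tab t" using lex_code_tab_col_stab[OF t ci p] by auto
      then show ?thesis using False by simp
    qed (simp add: sign_id)
  qed
  also have "\<dots> = 1" using CS_id[of t] finite_CS[of t] by simp
  finally show "e t (tab t) = 1" .
next
  assume "e t R \<noteq> 0"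
  then obtain p where p: "p \<in> CS t" "tab (p \<circ> t) = R"
  proof -
    assume "e t R \<noteq> 0"
    then have "\<exists>p\<in>CS t. of_int (sign p) * (if tab (p \<circ> t) = R then 1 else 0) \<noteq> (0::real)"
    proof (rule contrapos_np)
      assume "\<not> (\<exists>p\<in>CS t. of_int (sign p) * (if tab (p \<circ> t) = R then 1 else 0) \<noteq> (0::real))"
      then have "\<forall>p\<in>CS t. of_int (sign p) * (if tab (p \<circ> t) = R then 1 else 0) = (0::real)" by blast
      then show "e t R = 0" unfolding polytabloid_def by (intro sum.neutral) 
    qed
    then show ?thesis using that by (auto split: if_splits)
  qed
  show "R = tab t \<or> lex_code n (tab t) < lex_code n R"
  proof (cases "p = id")
    case True then show ?thesis using p by simp
  next
    case False then show ?thesis using lex_code_tab_col_stab[OF t ci p(1)] p(2) by simp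
  qed
qed

lemma row_increasing_entries_before:
  assumes t: "t \<in> T" and ri: "row_increasing t" and x: "(i,j) \<in> Y"
  shows "{k \<in> {1..n}. row t k = i \<and> k < t (i,j)} = t ` {(i,j') | j'. j' < j}"
proof
  show "{k \<in> {1..n}. row t k = i \<and> k < t (i,j)} \<subseteq> t ` {(i,j') | j'. j' < j}"
  proof
    fix k assume k: "k \<in> {k \<in> {1..n}. row t k = i \<and> k < t (i,j)}"
    then have kn: "k \<in> {1..n}" by simp
    obtain j' where cj: "cell t k = (i,j')" using k by (cases "cell t k") (auto simp: row_def)
    have inC: "(i,j') \<in> Y" using cell_in(1)[OF t kn] cj by simp
    have tk: "t (i,j') = k" using cell_in(2)[OF t kn] cj by simp
    have "j' < j"
    proof (rule ccontr)
      assume "\<not> j' < j"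
      then have "j < j' \<or> j = j'" by auto
      then show False
      proof
        assume "j < j'" then have "t (i,j) < t (i,j')" using ri x inC by (auto simp: row_increasing_def)
        then show False using tk k by simp
      next
        assume "j = j'" then show False using tk k by simp
      qed
    qed
    then show "k \<in> t ` {(i,j') | j'. j' < j}" using tk by blast
  qed
next
  show "t ` {(i,j') | j'. j' < j} \<subseteq> {k \<in> {1..n}. row t k = i \<and> k < t (i,j)}"
  proof
    fix k assume "k \<in> t ` {(i,j') | j'. j' < j}"
    then obtain j' where j': "j' < j" "k = t (i,j')" by blast
    have inC: "(i,j') \<in> Y" using diagram_down_closed[OF x, of i j'] j' by simp
    show "k \<in> {k \<in> {1..n}. row t k = i \<and> k < t (i,j)}"
      using tableau_in_range[OF t inC] cell_tableau[OF t inC] ri x inC j' by (auto simp: row_def row_increasing_def)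
  qed
qed

lemma card_row_increasing_entries_before:
  assumes t: "t \<in> T" and ri: "row_increasing t" and x: "(i,j) \<in> Y"
  shows "card {k \<in> {1..n}. row t k = i \<and> k < t (i,j)} = j"
proof -
  have "inj_on t {(i,j') | j'. j' < j}"
  proof (rule inj_onI)
    fix a b assume "a \<in> {(i,j') | j'. j' < j}" "b \<in> {(i,j') | j'. j' < j}" "t a = t b"
    moreover have "a \<in> Y" "b \<in> Y" using calculation(1,2) diagram_down_closed[OF x] by auto
    ultimately show "a = b" using tableau_inj[OF t] by blast
  qed
  moreover have "{(i,j') | j'. j' < j} = (\<lambda>j'. (i,j')) ` {..<j}" by auto
  moreover have "inj_on (\<lambda>j'. (i::nat,j'::nat)) {..<j}" by (auto simp: inj_on_def)
  ultimately show ?thesis unfolding row_increasing_entries_before[OF assms] by (simp add: card_image)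
qed

lemma row_increasing_tab_inj:
  assumes t: "t \<in> T" and u: "u \<in> T" and rt: "row_increasing t" and ru: "row_increasing u" and eq: "tab t = tab u"
  shows "t = u"
proof -
  have rowe: "row t k = row u k" if "k \<in> {1..n}" for k
    using fun_cong[OF eq, of k] that by (simp add: tab_eq_row)
  have same: "t x = u x" if x: "x \<in> Y" for x
  proof -
    obtain i j where ij: "x = (i,j)" by (cases x)
    define k where "k = t x"
    have kn: "k \<in> {1..n}" unfolding k_def by (rule tableau_in_range[OF t x])
    have ct: "cell t k = (i,j)" unfolding k_def ij using cell_tableau[OF t x[unfolded ij]] .
    obtain i' j' where cu: "cell u k = (i',j')" by (cases "cell u k")
    have i': "i' = i" using rowe[OF kn] ct cu by (simp add: row_def)
    have inCu: "(i,j') \<in> Y" using cell_in(1)[OF u kn] cu i' by simp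
    have uk: "u (i,j') = k" using cell_in(2)[OF u kn] cu i' by simp
    have tk: "t (i,j) = k" using k_def ij by simp
    have "{k' \<in> {1..n}. row t k' = i \<and> k' < k} = {k' \<in> {1..n}. row u k' = i \<and> k' < k}"
      using rowe by auto
    then have "j = j'" using card_row_increasing_entries_before[OF t rt x[unfolded ij]] card_row_increasing_entries_before[OF u ru inCu] tk uk
      by simp
    then show ?thesis using uk tk ij by simp
  qed
  show ?thesis by (rule extensionalityI[OF tableauD(2)[OF t] tableauD(2)[OF u] same])
qed

lemma tab_restrict: "tab (restrict f Y) = tab f"
  unfolding tabloid_def cell_restrict ..

lemma col_code_restrict: "col_code (restrict f Y) = col_code f"
  unfolding col_code_def col_def cell_restrict ..

lemma col_le: "t \<in> T \<Longrightarrow> k \<in> {1..n} \<Longrightarrow> col t k \<le> n"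
  using diagram_bound[OF cell_in(1)] by (fastforce simp: col_def)

lemma col_cell: "t \<in> T \<Longrightarrow> (i,j) \<in> Y \<Longrightarrow> col t (t (i,j)) = j"
  using cell_tableau by (simp add: col_def)

lemma row_cell: "t \<in> T \<Longrightarrow> (i,j) \<in> Y \<Longrightarrow> row t (t (i,j)) = i"
  using cell_tableau by (simp add: row_def)

end

context partition_shape
begin

definition garnir_lower :: "((nat \<times> nat) \<Rightarrow> nat) \<Rightarrow> nat \<Rightarrow> nat \<Rightarrow> nat set" where
  "garnir_lower t i j = {t (i', j) | i'. i \<le> i' \<and> (i', j) \<in> Y}"

definition garnir_upper :: "((nat \<times> nat) \<Rightarrow> nat) \<Rightarrow> nat \<Rightarrow> nat \<Rightarrow> nat set" where
  "garnir_upper t i j = {t (i', Suc j) | i'. i' \<le> i}"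

lemma garnir_lower_col: "t \<in> T \<Longrightarrow> a \<in> garnir_lower t i j \<Longrightarrow> col t a = j"
  using col_cell by (auto simp: garnir_lower_def)

lemma garnir_upper_col:
  "t \<in> T \<Longrightarrow> (i, Suc j) \<in> Y \<Longrightarrow> b \<in> garnir_upper t i j \<Longrightarrow> col t b = Suc j"
  using col_cell diagram_down_closed by (fastforce simp: garnir_upper_def)

lemma garnir_subset:
  assumes "t \<in> T" "(i, Suc j) \<in> Y"
  shows "garnir_lower t i j \<union> garnir_upper t i j \<subseteq> {1..n}"
  using assms tableau_in_range diagram_down_closed
  by (fastforce simp: garnir_lower_def garnir_upper_def)

lemma garnir_disjoint:
  assumes "t \<in> T" "(i, Suc j) \<in> Y"
  shows "garnir_lower t i j \<inter> garnir_upper t i j = {}"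
  using garnir_lower_col[OF assms(1)] garnir_upper_col[OF assms] by fastforce

lemma garnir_upper_less_lower:
  assumes t: "t \<in> T" and ci: "col_increasing t" and c1: "(i, j) \<in> Y" and c2: "(i, Suc j) \<in> Y"
    and desc: "t (i, Suc j) < t (i, j)"
    and a: "a \<in> garnir_lower t i j" and b: "b \<in> garnir_upper t i j"
  shows "b < a"
proof -
  obtain i1 where i1: "a = t (i1, j)" "i \<le> i1" "(i1, j) \<in> Y" using a by (auto simp: garnir_lower_def)
  obtain i2 where i2: "b = t (i2, Suc j)" "i2 \<le> i" using b by (auto simp: garnir_upper_def)
  have "t (i, j) \<le> a"
    using i1 ci c1 by (cases "i = i1") (auto simp: col_increasing_def less_imp_le)
  moreover have "b \<le> t (i, Suc j)"
    using i2 ci c2 diagram_down_closed[OF c2 i2(2)]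
    by (cases "i = i2") (auto simp: col_increasing_def less_imp_le)
  ultimately show ?thesis using desc by simp
qed

text \<open>Pigeonhole: column \<open>j\<close> has fewer rows than the Garnir set has elements, and every
  column-permuted copy of the Garnir set lies in the rows of column \<open>j\<close>.\<close>

lemma garnir_rows_not_inj:
  assumes t: "t \<in> T" and c1: "(i, j) \<in> Y" and c2: "(i, Suc j) \<in> Y" and p: "p \<in> CS t"
  shows "\<not> inj_on (row t \<circ> inv p) (garnir_lower t i j \<union> garnir_upper t i j)"
proof
  define A where "A = garnir_lower t i j"
  define B where "B = garnir_upper t i j"
  define Rj where "Rj = {r. (r, j) \<in> Y}"
  assume inj: "inj_on (row t \<circ> inv p) (garnir_lower t i j \<union> garnir_upper t i j)"
  have pp: "p permutes {1..n}" and ip: "inv p \<in> CS t" using p CS_inv[OF p] by (auto simp: CS_altdef)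
  have Bc: "(i', Suc j) \<in> Y" if "i' \<le> i" for i' using diagram_down_closed[OF c2 that] by simp
  have finRj: "finite Rj" unfolding Rj_def
    by (rule finite_subset[of _ "fst ` Y"]) (auto simp: image_iff intro!: bexI[where x="(_, j)"])
  have row_in_Rj: "row t (inv p k) \<in> Rj" if "k \<in> A \<union> B" for k
  proof -
    have k: "k \<in> {1..n}" using garnir_subset[OF t c2] that by (auto simp: A_def B_def)
    have "col t (inv p k) = col t k" using ip k by (simp add: CS_altdef)
    then have "col t (inv p k) \<in> {j, Suc j}"
      using that garnir_lower_col[OF t] garnir_upper_col[OF t c2] by (auto simp: A_def B_def)
    moreover have "(row t (inv p k), col t (inv p k)) \<in> Y"
      using cell_in(1)[OF t inv_perm_in_range[OF pp k]] by (simp add: row_def col_def)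
    ultimately show ?thesis
      using diagram_down_closed[of "row t (inv p k)" "Suc j" "row t (inv p k)" j] by (auto simp: Rj_def)
  qed
  have cardA: "card A = card {r \<in> Rj. i \<le> r}"
  proof -
    have "A = t ` ((\<lambda>r. (r, j)) ` {r \<in> Rj. i \<le> r})" by (auto simp: A_def Rj_def garnir_lower_def)
    moreover have "inj_on t ((\<lambda>r. (r, j)) ` {r \<in> Rj. i \<le> r})"
      using tableau_inj[OF t] by (auto simp: inj_on_def Rj_def)
    moreover have "inj_on (\<lambda>r. (r, j)) {r \<in> Rj. i \<le> r}" by (auto simp: inj_on_def)
    ultimately show ?thesis by (simp add: card_image)
  qed
  have cardB: "card B = Suc i"
  proof -
    have "B = t ` ((\<lambda>r. (r, Suc j)) ` {..i})" by (auto simp: B_def garnir_upper_def)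
    moreover have "inj_on t ((\<lambda>r. (r, Suc j)) ` {..i})"
      using tableau_inj[OF t] Bc by (simp add: inj_on_def) blast
    moreover have "inj_on (\<lambda>r. (r, Suc j)) {..i}" by (auto simp: inj_on_def)
    ultimately show ?thesis by (simp add: card_image)
  qed
  have "Rj = {r \<in> Rj. i \<le> r} \<union> {..<i}"
    unfolding Rj_def using diagram_down_closed[OF c1] by auto
  then have "card Rj = card {r \<in> Rj. i \<le> r} + i"
    using finRj card_Un_disjoint[of "{r \<in> Rj. i \<le> r}" "{..<i}"] by (metis (no_types, lifting)
        card_lessThan disjoint_iff finite_Un lessThan_iff mem_Collect_eq not_le)
  moreover have "card (A \<union> B) = card A + card B"
    using garnir_disjoint[OF t c2] garnir_subset[OF t c2]
    by (intro card_Un_disjoint) (auto simp: A_def B_def intro: finite_subset)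
  moreover have "card (A \<union> B) \<le> card Rj"
    using inj row_in_Rj finRj by (intro card_inj_on_le) (auto simp: A_def B_def)
  ultimately show False using cardA cardB by simp
qed

lemma sum_sign_transpose_invariant:
  fixes g :: "('a \<Rightarrow> 'a) \<Rightarrow> real"
  assumes D: "finite D" and xy: "x \<in> D" "y \<in> D" "x \<noteq> y"
    and inv: "\<And>\<sigma>. \<sigma> permutes D \<Longrightarrow> g (\<sigma> \<circ> Transposition.transpose x y) = g \<sigma>"
  shows "(\<Sum>\<sigma>\<in>{\<sigma>. \<sigma> permutes D}. of_int (sign \<sigma>) * g \<sigma>) = 0"
proof -
  let ?\<tau> = "Transposition.transpose x y"
  let ?f = "\<lambda>\<sigma>. of_int (sign \<sigma>) * g \<sigma>"
  have \<tau>: "?\<tau> permutes D" using xy by (intro permutes_swap_id)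
  have \<tau>\<tau>: "\<sigma> \<circ> ?\<tau> \<circ> ?\<tau> = \<sigma>" for \<sigma> :: "'a \<Rightarrow> 'a" by (simp add: comp_assoc)
  have neg: "?f (\<sigma> \<circ> ?\<tau>) = - ?f \<sigma>" if "\<sigma> permutes D" for \<sigma>
    using that \<tau> xy(3) inv[OF that]
    by (simp add: sign_compose permutes_imp_permutation[OF D] sign_swap_id)
  have "sum ?f {\<sigma>. \<sigma> permutes D} = (\<Sum>\<sigma>\<in>{\<sigma>. \<sigma> permutes D}. ?f (\<sigma> \<circ> ?\<tau>))"
    by (rule sum.reindex_bij_witness[where i = "\<lambda>\<sigma>. \<sigma> \<circ> ?\<tau>" and j = "\<lambda>\<sigma>. \<sigma> \<circ> ?\<tau>"])
       (auto simp: \<tau>\<tau> permutes_compose[OF \<tau>])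
  also have "\<dots> = - sum ?f {\<sigma>. \<sigma> permutes D}"
    by (simp add: neg sum_negf)
  finally show ?thesis by simp
qed

text \<open>The Garnir relation: alternating over all permutations of the Garnir set kills \<open>e t\<close>,
  because each tabloid \<open>{p t}\<close> is fixed by a transposition of two entries in the same row.\<close>

lemma garnir_relation:
  assumes t: "t \<in> T" and c1: "(i, j) \<in> Y" and c2: "(i, Suc j) \<in> Y"
  shows "(\<Sum>\<sigma>\<in>{\<sigma>. \<sigma> permutes garnir_lower t i j \<union> garnir_upper t i j}.
            of_int (sign \<sigma>) * e (\<sigma> \<circ> t) R) = 0"
proof -
  define D where "D = garnir_lower t i j \<union> garnir_upper t i j"
  define P where "P = {\<sigma>. \<sigma> permutes D}"
  have Dn: "D \<subseteq> {1..n}" using garnir_subset[OF t c2] by (simp add: D_def)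
  have finD: "finite D" using Dn finite_subset by blast
  have Pn: "\<sigma> permutes {1..n}" if "\<sigma> \<in> P" for \<sigma>
    using that Dn unfolding P_def by (auto intro: permutes_subset)
  have inner: "(\<Sum>\<sigma>\<in>P. of_int (sign \<sigma>) * (if tab (\<sigma> \<circ> p \<circ> t) = R then 1 else 0)) = (0::real)"
    if p: "p \<in> CS t" for p
  proof -
    have pp: "p permutes {1..n}" using p by (simp add: CS_altdef)
    obtain x y where xy: "x \<in> D" "y \<in> D" "x \<noteq> y" "row t (inv p x) = row t (inv p y)"
      using garnir_rows_not_inj[OF t c1 c2 p] unfolding inj_on_def D_def by auto
    let ?\<tau> = "Transposition.transpose x y"
    have row_swap: "tab (p \<circ> t) \<circ> ?\<tau> = tab (p \<circ> t)"
    proof -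
      have "tab (p \<circ> t) x = tab (p \<circ> t) y"
        using xy Dn row_perm[OF t pp] by (auto simp: tab_eq_row)
      then show ?thesis by (auto simp: transpose_def fun_eq_iff)
    qed
    show ?thesis unfolding P_def
    proof (rule sum_sign_transpose_invariant[OF finD xy(1-3)])
      fix \<sigma> assume \<sigma>: "\<sigma> permutes D"
      have \<tau>: "?\<tau> permutes D" using xy by (intro permutes_swap_id)
      have \<sigma>n: "\<sigma> permutes {1..n}" and \<sigma>\<tau>n: "\<sigma> \<circ> ?\<tau> permutes {1..n}"
        using Pn \<sigma> permutes_compose[OF \<tau> \<sigma>] by (auto simp: P_def)
      have "inv (\<sigma> \<circ> ?\<tau>) = ?\<tau> \<circ> inv \<sigma>"
        using permutes_bij[OF \<sigma>] by (simp add: o_inv_distrib inv_unique_comp)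
      then have "tab (\<sigma> \<circ> ?\<tau> \<circ> p \<circ> t) = tab (\<sigma> \<circ> p \<circ> t)"
        using tab_comp_perm[OF t \<sigma>\<tau>n pp] tab_comp_perm[OF t \<sigma>n pp] row_swap
        by (metis comp_assoc)
      then show "(if tab (\<sigma> \<circ> ?\<tau> \<circ> p \<circ> t) = R then 1 else 0) = (if tab (\<sigma> \<circ> p \<circ> t) = R then 1 else 0)"
        by simp
    qed
  qed
  have "(\<Sum>\<sigma>\<in>P. of_int (sign \<sigma>) * e (\<sigma> \<circ> t) R)
      = (\<Sum>\<sigma>\<in>P. \<Sum>p\<in>CS t. of_int (sign \<sigma>) * (of_int (sign p) * (if tab (\<sigma> \<circ> p \<circ> t) = R then 1 else 0)))"
    by (rule sum.cong[OF refl]) (simp add: e_comp_expand[OF t Pn] sum_distrib_left)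
  also have "\<dots> = (\<Sum>p\<in>CS t. of_int (sign p) * (\<Sum>\<sigma>\<in>P. of_int (sign \<sigma>) * (if tab (\<sigma> \<circ> p \<circ> t) = R then 1 else 0)))"
    by (subst sum.swap) (simp add: sum_distrib_left algebra_simps)
  also have "\<dots> = 0" using inner by simp
  finally show ?thesis unfolding P_def D_def .
qed

lemma garnir_col_stab:
  assumes t: "t \<in> T" and c2: "(i, Suc j) \<in> Y"
    and \<sigma>: "\<sigma> permutes garnir_lower t i j \<union> garnir_upper t i j"
    and fix_lower: "\<sigma> ` garnir_lower t i j = garnir_lower t i j"
  shows "\<sigma> \<in> CS t"
proof -
  let ?A = "garnir_lower t i j" and ?B = "garnir_upper t i j"
  have "\<sigma> ` ?A \<union> \<sigma> ` ?B = ?A \<union> ?B" using permutes_image[OF \<sigma>] by (simp add: image_Un)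
  moreover have "\<sigma> ` ?A \<inter> \<sigma> ` ?B = {}"
    using garnir_disjoint[OF t c2] permutes_inj[OF \<sigma>] by (simp add: image_Int[symmetric])
  ultimately have fix_upper: "\<sigma> ` ?B = ?B"
    using fix_lower garnir_disjoint[OF t c2] by (auto simp: set_eq_iff)
  have "col t (\<sigma> k) = col t k" for k
  proof -
    consider "k \<in> ?A" | "k \<in> ?B" | "k \<notin> ?A \<union> ?B" by blast
    then show ?thesis
    proof cases
      case 1
      then have "\<sigma> k \<in> ?A" using fix_lower by blast
      then show ?thesis using 1 garnir_lower_col[OF t] by simp
    next
      case 2
      then have "\<sigma> k \<in> ?B" using fix_upper by blast
      then show ?thesis using 2 garnir_upper_col[OF t c2] by simp
    qed (simp add: permutes_not_in[OF \<sigma>])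
  qed
  then show ?thesis
    using permutes_subset[OF \<sigma> garnir_subset[OF t c2]] by (simp add: CS_altdef)
qed

text \<open>If \<open>\<sigma>\<close> moves some entry of the lower part out of it, then the smallest entry whose column
  changes is an upper entry moved one column to the left, since upper entries are smaller.\<close>

lemma garnir_col_code_less:
  assumes t: "t \<in> T" and ci: "col_increasing t" and c1: "(i, j) \<in> Y" and c2: "(i, Suc j) \<in> Y"
    and desc: "t (i, Suc j) < t (i, j)"
    and \<sigma>: "\<sigma> permutes garnir_lower t i j \<union> garnir_upper t i j"
    and moves: "\<sigma> ` garnir_lower t i j \<noteq> garnir_lower t i j"
  shows "col_code (restrict (\<sigma> \<circ> t) Y) < col_code t"
proof -
  define A where "A = garnir_lower t i j"
  define B where "B = garnir_upper t i j"
  have Dn: "A \<union> B \<subseteq> {1..n}" using garnir_subset[OF t c2] by (simp add: A_def B_def)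
  have colA: "col t a = j" if "a \<in> A" for a using that garnir_lower_col[OF t] by (simp add: A_def)
  have colB: "col t b = Suc j" if "b \<in> B" for b using that garnir_upper_col[OF t c2] by (simp add: B_def)
  have \<sigma>n: "\<sigma> permutes {1..n}" using permutes_subset[OF \<sigma>] Dn by (simp add: A_def B_def)
  have i\<sigma>: "inv \<sigma> permutes A \<union> B" using permutes_inv[OF \<sigma>] by (simp add: A_def B_def)
  have "\<not> \<sigma> ` A \<subseteq> A"
  proof
    assume sub: "\<sigma> ` A \<subseteq> A"
    have "finite A" using Dn finite_subset by blast
    moreover have "card (\<sigma> ` A) = card A"
      using permutes_inj[OF \<sigma>] by (simp add: card_image inj_on_def inj_def)
    ultimately have "\<sigma> ` A = A" using sub card_subset_eq by blast
    then show False using moves by (simp add: A_def)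
  qed
  then obtain a where a: "a \<in> A" "\<sigma> a \<notin> A" by blast
  have "\<sigma> a \<in> A \<union> B" using permutes_in_image[OF \<sigma>] a(1) by (simp add: A_def B_def)
  with a(2) have \<sigma>a: "\<sigma> a \<in> B" by simp
  define g where "g k = (if k \<in> {1..n} then col t k else 0)" for k
  define f where "f k = (if k \<in> {1..n} then col t (inv \<sigma> k) else 0)" for k
  have f_eq: "f = (\<lambda>k. if k \<in> {1..n} then col (restrict (\<sigma> \<circ> t) Y) k else 0)"
    using col_perm[OF t \<sigma>n] by (auto simp: f_def col_def cell_restrict fun_eq_iff)
  have differ: "\<sigma> a \<in> {1..n} \<and> f (\<sigma> a) \<noteq> g (\<sigma> a)"
    using \<sigma>a Dn colA[OF a(1)] colB[OF \<sigma>a] permutes_inverses(2)[OF \<sigma>] by (auto simp: f_def g_def)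
  define k0 where "k0 = (LEAST k. k \<in> {1..n} \<and> f k \<noteq> g k)"
  have k0: "k0 \<in> {1..n}" "f k0 \<noteq> g k0" using LeastI[of "\<lambda>k. k \<in> {1..n} \<and> f k \<noteq> g k", OF differ] by (auto simp: k0_def)
  have before: "f k = g k" if "k \<in> {1..n}" "k < k0" for k
    using not_less_Least[of k "\<lambda>k. k \<in> {1..n} \<and> f k \<noteq> g k"] that unfolding k0_def by auto
  have "k0 \<le> \<sigma> a" unfolding k0_def by (rule Least_le[of "\<lambda>k. k \<in> {1..n} \<and> f k \<noteq> g k", OF differ])
  have k0D: "k0 \<in> A \<union> B"
  proof (rule ccontr)
    assume "k0 \<notin> A \<union> B"
    then have "inv \<sigma> k0 = k0" using permutes_not_in[OF i\<sigma>] by simp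
    with k0 show False by (simp add: f_def g_def)
  qed
  have k0B: "k0 \<in> B"
  proof (rule ccontr)
    assume "k0 \<notin> B"
    then have "k0 \<in> garnir_lower t i j" using k0D by (simp add: A_def)
    then have "\<sigma> a < k0" using garnir_upper_less_lower[OF t ci c1 c2 desc] \<sigma>a by (simp add: B_def)
    with \<open>k0 \<le> \<sigma> a\<close> show False by simp
  qed
  have "inv \<sigma> k0 \<in> A"
  proof (rule ccontr)
    assume "inv \<sigma> k0 \<notin> A"
    then have "inv \<sigma> k0 \<in> B" using permutes_in_image[OF i\<sigma>] k0D by blast
    then show False using k0 colB k0B by (simp add: f_def g_def)
  qed
  then have "f k0 < g k0" using colA colB[OF k0B] k0(1) by (simp add: f_def g_def)
  then have "lex_code n f < lex_code n g"
    using col_le[OF t inv_perm_in_range[OF \<sigma>n]] before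
    by (intro lex_code_less[OF _ k0(1)]) (auto simp: f_def)
  moreover have "g = (\<lambda>k. if k \<in> {1..n} then col t k else 0)" by (simp add: g_def fun_eq_iff)
  ultimately show ?thesis by (simp add: col_code_def f_eq)
qed

lemma garnir_straighten:
  assumes t: "t \<in> T" and ci: "col_increasing t" and c1: "(i, j) \<in> Y" and c2: "(i, Suc j) \<in> Y"
    and desc: "t (i, Suc j) < t (i, j)"
  shows "e t \<in> fun_vs.span (e ` {u \<in> T. col_code u < col_code t})"
proof -
  let ?A = "garnir_lower t i j" and ?D = "garnir_lower t i j \<union> garnir_upper t i j"
  let ?S = "fun_vs.span (e ` {u \<in> T. col_code u < col_code t})"
  define P where "P = {\<sigma>. \<sigma> permutes ?D}"
  define P0 where "P0 = {\<sigma> \<in> P. \<sigma> ` ?A = ?A}"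
  define F where "F \<sigma> = (\<lambda>R. of_int (sign \<sigma>) * e (\<sigma> \<circ> t) R)" for \<sigma>
  have Dn: "?D \<subseteq> {1..n}" by (rule garnir_subset[OF t c2])
  have finP: "finite P" unfolding P_def using finite_subset[OF Dn] by (simp add: finite_permutations)
  have Pn: "\<sigma> permutes {1..n}" if "\<sigma> \<in> P" for \<sigma> using that Dn by (auto simp: P_def intro: permutes_subset)
  have zero: "(\<Sum>\<sigma>\<in>P. F \<sigma>) = 0"
    using garnir_relation[OF t c1 c2] by (simp add: fun_eq_iff sum_fun_apply F_def P_def)
  have P0_term: "F \<sigma> = e t" if "\<sigma> \<in> P0" for \<sigma>
  proof -
    have "\<sigma> \<in> CS t" using that garnir_col_stab[OF t c2] by (simp add: P0_def P_def)
    then have "e (\<sigma> \<circ> t) R = of_int (sign \<sigma>) * e t R" for R by (rule e_col_stab[OF t])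
    then show "F \<sigma> = e t" by (simp add: F_def fun_eq_iff mult.assoc[symmetric] sign_sq)
  qed
  have other_terms: "F \<sigma> \<in> ?S" if "\<sigma> \<in> P - P0" for \<sigma>
  proof -
    have "restrict (\<sigma> \<circ> t) Y \<in> {u \<in> T. col_code u < col_code t}"
      using that restrict_perm_tableau[OF t Pn] garnir_col_code_less[OF t ci c1 c2 desc]
      by (auto simp: P0_def P_def)
    then have "(\<lambda>R. of_int (sign \<sigma>) * e (restrict (\<sigma> \<circ> t) Y) R) \<in> ?S"
      by (intro fun_vs.span_scale fun_vs.span_base imageI)
    then show ?thesis by (simp add: F_def e_restrict)
  qed
  have "id \<in> P0" "finite P0" using finP by (simp_all add: P0_def P_def permutes_id)
  then have card_P0: "card P0 > 0" by (auto simp: card_gt_0_iff)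
  have "(\<Sum>\<sigma>\<in>P. F \<sigma>) = (\<Sum>\<sigma>\<in>P0. F \<sigma>) + (\<Sum>\<sigma>\<in>P - P0. F \<sigma>)"
    using sum.subset_diff[of P0 P F] finP by (simp add: P0_def add.commute)
  moreover have "(\<Sum>\<sigma>\<in>P0. F \<sigma>) = (\<lambda>R. real (card P0) * e t R)"
    by (simp add: fun_eq_iff sum_fun_apply P0_term)
  ultimately have "(\<lambda>R. real (card P0) * e t R) = - (\<Sum>\<sigma>\<in>P - P0. F \<sigma>)"
    using zero by (simp add: eq_neg_iff_add_eq_0)
  moreover have "- (\<Sum>\<sigma>\<in>P - P0. F \<sigma>) \<in> ?S"
    by (intro fun_vs.span_neg fun_vs.span_sum other_terms)
  ultimately have "(\<lambda>R. real (card P0) * e t R) \<in> ?S" by simp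
  from fun_vs.span_scale[OF this, of "1 / real (card P0)"]
  show ?thesis using card_P0 by simp
qed

text \<open>Swapping a column inversion only changes the sign of \<open>e t\<close>, keeps all columns, and moves
  the smaller entry of the inversion up, which makes the tabloid lexicographically smaller.\<close>

lemma col_inversion_swap:
  assumes t: "t \<in> T" and not_ci: "\<not> col_increasing t"
  obtains u where "u \<in> T" "e u = (\<lambda>R. - e t R)" "col_code u = col_code t"
    "lex_code n (tab u) < lex_code n (tab t)"
proof -
  obtain r r' c where c1: "(r, c) \<in> Y" and c2: "(r', c) \<in> Y" and rr: "r < r'"
    and "\<not> t (r, c) < t (r', c)"
    using not_ci unfolding col_increasing_def by blast
  moreover have "t (r, c) \<noteq> t (r', c)" using tableau_inj[OF t c1 c2] rr by auto
  ultimately have ab: "t (r', c) < t (r, c)" by simp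
  define a where "a = t (r', c)"
  define b where "b = t (r, c)"
  define \<tau> where "\<tau> = Transposition.transpose b a"
  have an: "a \<in> {1..n}" and bn: "b \<in> {1..n}"
    unfolding a_def b_def using tableau_in_range[OF t] c1 c2 by auto
  have tp: "\<tau> permutes {1..n}" unfolding \<tau>_def by (rule permutes_swap_id[OF bn an])
  have tinv: "inv \<tau> = \<tau>" unfolding \<tau>_def by (simp add: inv_unique_comp)
  have ca: "col t a = c" "row t a = r'" unfolding a_def using col_cell[OF t c2] row_cell[OF t c2] by auto
  have cb: "col t b = c" "row t b = r" unfolding b_def using col_cell[OF t c1] row_cell[OF t c1] by auto
  have colt: "col t (\<tau> k) = col t k" for k
    using ca cb by (cases "k = a"; cases "k = b") (auto simp: \<tau>_def)
  have tCS: "\<tau> \<in> CS t" using tp colt by (simp add: CS_altdef)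
  let ?u = "restrict (\<tau> \<circ> t) Y"
  show thesis
  proof
    show "?u \<in> T" by (rule restrict_perm_tableau[OF t tp])
    have "sign \<tau> = -1" unfolding \<tau>_def using ab by (simp add: a_def b_def sign_swap_id)
    then show "e ?u = (\<lambda>R. - e t R)"
      using e_col_stab[OF t tCS] by (simp add: e_restrict fun_eq_iff)
    have "(\<lambda>k. if k \<in> {1..n} then col ?u k else 0) = (\<lambda>k. if k \<in> {1..n} then col t k else 0)"
      using col_perm[OF t tp] colt tinv by (auto simp: col_def cell_restrict fun_eq_iff)
    then show "col_code ?u = col_code t" by (simp add: col_code_def)
    have tabt: "tab ?u = tab t \<circ> \<tau>" unfolding tab_restrict tab_perm[OF t tp] tinv ..
    show "lex_code n (tab ?u) < lex_code n (tab t)"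
    proof (rule lex_code_less[OF _ an])
      show "tab ?u k \<le> n" if "k \<in> {1..n}" for k
        unfolding tabt using tab_le[OF t perm_in_range[OF tp that]] by simp
      show "tab ?u k = tab t k" if "k \<in> {1..n}" "k < a" for k
        unfolding tabt using that ab by (simp add: \<tau>_def a_def b_def)
      show "tab ?u a < tab t a"
        unfolding tabt using ca cb an bn rr by (simp add: \<tau>_def tab_eq_row)
    qed
  qed
qed

lemma row_descent_adjacent:
  assumes t: "t \<in> T" and c: "(i, j') \<in> Y" and jj: "j < j'" and gt: "t (i, j') < t (i, j)"
  shows "\<exists>j''. (i, Suc j'') \<in> Y \<and> t (i, Suc j'') < t (i, j'')"
proof (rule ccontr)
  assume "\<not> ?thesis"
  then have inc: "t (i, j'') < t (i, Suc j'')" if "(i, Suc j'') \<in> Y" for j''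
    using that tableau_inj[OF t, of "(i, Suc j'')" "(i, j'')"] diagram_down_closed[OF that, of i j'']
    by fastforce
  have "t (i, j) < t (i, j + Suc d)" if "(i, j + Suc d) \<in> Y" for d
    using that
  proof (induction d)
    case 0 then show ?case using inc by simp
  next
    case (Suc d)
    have "(i, j + Suc d) \<in> Y" using diagram_down_closed[OF Suc.prems, of i "j + Suc d"] by simp
    then have "t (i, j) < t (i, j + Suc d)" by (rule Suc.IH)
    also have "\<dots> < t (i, Suc (j + Suc d))" using inc Suc.prems by simp
    finally show ?case by simp
  qed
  from this[of "j' - Suc j"] c jj gt show False by simp
qed

lemma polytabloid_in_standard_span:
  assumes "t \<in> T"
  shows "e t \<in> fun_vs.span (e ` SYT)"
  using assms
proof (induction t rule: wf_induct_rule[OF wf_inv_image[OF wf_lex_prod[OF wf_less_than wf_less_than],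
        of "\<lambda>t. (col_code t, lex_code n (tab t))"]])
  case (1 t)
  let ?Sp = "fun_vs.span (e ` SYT)"
  have IH: "e u \<in> ?Sp" if "u \<in> T" "col_code u < col_code t \<or>
      col_code u = col_code t \<and> lex_code n (tab u) < lex_code n (tab t)" for u
    using 1 that by auto
  show ?case
  proof (cases "col_increasing t")
    case False
    then obtain u where u: "u \<in> T" "col_code u = col_code t" "lex_code n (tab u) < lex_code n (tab t)"
      and eu: "e u = (\<lambda>R. - e t R)"
      using col_inversion_swap[OF "1.prems"] by blast
    have "- e u \<in> ?Sp" using IH[OF u(1)] u(2,3) by (intro fun_vs.span_neg) simp
    then show ?thesis by (simp add: eu fun_Compl_def)
  next
    case ci: True
    show ?thesis
    proof (cases "row_increasing t")
      case True
      then show ?thesis using ci "1.prems" by (intro fun_vs.span_base imageI) (simp add: SYT_def)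
    next
      case False
      then obtain i j j' where ij: "(i, j) \<in> Y" "(i, j') \<in> Y" "j < j'" "\<not> t (i, j) < t (i, j')"
        unfolding row_increasing_def by blast
      then have "t (i, j') < t (i, j)"
        using tableau_inj[OF "1.prems" ij(1,2)] by (metis less_irrefl linorder_neqE_nat prod.inject)
      then obtain j'' where j'': "(i, Suc j'') \<in> Y" "t (i, Suc j'') < t (i, j'')"
        using row_descent_adjacent[OF "1.prems" ij(2,3)] by blast
      have "(i, j'') \<in> Y" using diagram_down_closed[OF j''(1), of i j''] by simp
      then have "e t \<in> fun_vs.span (e ` {u \<in> T. col_code u < col_code t})"
        using garnir_straighten[OF "1.prems" ci _ j''] by blast
      also have "\<dots> \<subseteq> ?Sp"
        using IH by (intro fun_vs.span_minimal fun_vs.subspace_span) auto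
      finally show ?thesis .
    qed
  qed
qed

lemma finite_tableaux: "finite T"
proof (rule finite_subset)
  show "T \<subseteq> PiE Y (\<lambda>_. {1..n})"
    using tableau_in_range tableauD(2) by (auto simp: PiE_def Pi_def)
  show "finite (PiE Y (\<lambda>_. {1..n}))" by (rule finite_PiE) auto
qed

lemma specht_span: "specht n lam = fun_vs.span (e ` T)"
proof
  show "specht n lam \<subseteq> fun_vs.span (e ` T)"
  proof
    fix v assume "v \<in> specht n lam"
    then obtain c where c: "\<forall>R. v R = (\<Sum>t\<in>T. c t * e t R)" by (auto simp: specht_def)
    have "v = (\<Sum>t\<in>T. (\<lambda>R. c t * e t R))" using c by (simp add: fun_eq_iff sum_fun_apply)
    also have "\<dots> \<in> fun_vs.span (e ` T)"
      by (intro fun_vs.span_sum fun_vs.span_scale fun_vs.span_base imageI)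
    finally show "v \<in> fun_vs.span (e ` T)" .
  qed
next
  show "fun_vs.span (e ` T) \<subseteq> specht n lam"
  proof (rule fun_vs.span_minimal)
    show "e ` T \<subseteq> specht n lam"
    proof
      fix v assume "v \<in> e ` T"
      then obtain t0 where t0: "t0 \<in> T" "v = e t0" by blast
      have "\<forall>R. v R = (\<Sum>t\<in>T. (if t = t0 then 1 else 0) * e t R)"
      proof
        fix R
        have "(\<Sum>t\<in>T. (if t = t0 then 1 else 0) * e t R) = (\<Sum>t\<in>T. if t = t0 then e t0 R else 0)"
          by (rule sum.cong) auto
        then show "v R = (\<Sum>t\<in>T. (if t = t0 then 1 else 0) * e t R)" using t0 finite_tableaux by simp
      qed
      then show "v \<in> specht n lam" unfolding specht_def by (intro CollectI exI)
    qed
    show "fun_vs.subspace (specht n lam)"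
      unfolding fun_vs.subspace_def
    proof (intro conjI ballI allI)
      show "0 \<in> specht n lam" unfolding specht_def by (intro CollectI exI[of _ "\<lambda>_. 0"]) simp
    next
      fix x y assume "x \<in> specht n lam" "y \<in> specht n lam"
      then obtain c d where "\<forall>R. x R = (\<Sum>t\<in>T. c t * e t R)" "\<forall>R. y R = (\<Sum>t\<in>T. d t * e t R)"
        unfolding specht_def by blast
      then show "x + y \<in> specht n lam" unfolding specht_def
        by (intro CollectI exI[of _ "\<lambda>t. c t + d t"]) (simp add: algebra_simps sum.distrib)
    next
      fix r :: real and x assume "x \<in> specht n lam"
      then obtain c where "\<forall>R. x R = (\<Sum>t\<in>T. c t * e t R)" unfolding specht_def by blast
      then show "(\<lambda>R. r * x R) \<in> specht n lam" unfolding specht_def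
        by (intro CollectI exI[of _ "\<lambda>t. r * c t"]) (simp add: sum_distrib_left mult.assoc)
    qed
  qed
qed

lemma specht_eq_standard_span: "specht n lam = fun_vs.span (e ` SYT)"
proof -
  have "fun_vs.span (e ` SYT) \<subseteq> fun_vs.span (e ` T)" by (rule fun_vs.span_mono) (auto simp: SYT_def)
  moreover have "fun_vs.span (e ` T) \<subseteq> fun_vs.span (e ` SYT)"
    by (rule fun_vs.span_minimal) (use polytabloid_in_standard_span in auto)
  ultimately show ?thesis unfolding specht_span by blast
qed

lemma e_in_specht: "t \<in> T \<Longrightarrow> e t \<in> specht n lam"
  unfolding specht_span by (intro fun_vs.span_base imageI)

lemma specht_add: "x \<in> specht n lam \<Longrightarrow> y \<in> specht n lam \<Longrightarrow> (\<lambda>R. x R + a * y R) \<in> specht n lam"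
proof -
  assume x: "x \<in> specht n lam" and y: "y \<in> specht n lam"
  have "(\<lambda>R. a * y R) \<in> specht n lam" using fun_vs.span_scale[of y "e ` T" a] y unfolding specht_span by simp
  then have "x + (\<lambda>R. a * y R) \<in> specht n lam" using fun_vs.span_add x unfolding specht_span by blast
  then show ?thesis by (simp add: plus_fun_def)
qed

end

lemma coord_eq:
  assumes B: "is_basis_of B V" and rep: "\<forall>R. v R = (\<Sum>b\<in>B. c b * b R)" and b0: "b0 \<in> B"
  shows "coord B v b0 = c b0"
proof -
  have fin: "finite B" and li: "lin_indep B" using B by (auto simp: is_basis_of_def)
  define c' where "c' = restrict c B"
  have rep': "\<forall>R. v R = (\<Sum>b\<in>B. c' b * b R)" using rep unfolding c'_def by simp
  have uniq: "d = c'" if d: "d \<in> extensional B \<and> (\<forall>R. v R = (\<Sum>b\<in>B. d b * b R))" for d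
  proof -
    have "\<forall>R. (\<Sum>b\<in>B. (d b - c' b) * b R) = 0"
      using d rep' by (simp add: algebra_simps sum_subtractf)
    moreover have li': "\<And>c. (\<forall>R. (\<Sum>b\<in>B. c b * b R) = 0) \<Longrightarrow> \<forall>b\<in>B. c b = 0"
      using li unfolding lin_indep_def by blast
    ultimately have "\<forall>b\<in>B. d b - c' b = 0" using li'[of "\<lambda>b. d b - c' b"] by blast
    then show "d = c'" using d unfolding c'_def by (intro extensionalityI[of _ B]) auto
  qed
  have "coord B v = c'" unfolding coord_def
  proof (rule the_equality)
    show "c' \<in> extensional B \<and> (\<forall>R. v R = (\<Sum>b\<in>B. c' b * b R))" using rep' unfolding c'_def by simp
  qed (rule uniq)
  then show ?thesis using b0 unfolding c'_def by simp
qed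

lemma coord_expansion:
  assumes B: "is_basis_of B V" and v: "v \<in> V"
  shows "\<forall>R. v R = (\<Sum>b\<in>B. coord B v b * b R)"
proof -
  have "\<forall>v\<in>V. \<exists>c. \<forall>R. v R = (\<Sum>b\<in>B. c b * b R)" using B by (simp add: is_basis_of_def)
  then obtain c where c: "\<forall>R. v R = (\<Sum>b\<in>B. c b * b R)" using v by blast
  have "(\<Sum>b\<in>B. coord B v b * b R) = (\<Sum>b\<in>B. c b * b R)" for R
    by (rule sum.cong[OF refl]) (simp add: coord_eq[OF B c])
  then show ?thesis using c by simp
qed

lemma coord_self:
  assumes U: "is_basis_of U V" and x: "x \<in> U"
  shows "coord U x x = 1"
proof -
  have "finite U" using U by (simp add: is_basis_of_def)
  have "(\<Sum>y\<in>U. (if y = x then 1 else 0) * y R) = (\<Sum>y\<in>U. if y = x then y R else 0)" for R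
    by (rule sum.cong) auto
  then have "\<forall>R. x R = (\<Sum>y\<in>U. (if y = x then 1 else 0) * y R)"
    using x \<open>finite U\<close> by simp
  from coord_eq[OF U this x] show ?thesis by simp
qed

lemma coord_change_of_basis_diag:
  assumes B: "is_basis_of B V" and U: "is_basis_of U V" and x: "x \<in> U"
  shows "(\<Sum>b\<in>B. coord B x b * coord U b x) = 1"
proof -
  have "x R = (\<Sum>y\<in>U. (\<Sum>b\<in>B. coord B x b * coord U b y) * y R)" for R
  proof -
    have "x R = (\<Sum>b\<in>B. coord B x b * (\<Sum>y\<in>U. coord U b y * y R))"
      using coord_expansion[OF B, of x] coord_expansion[OF U] B U x
      by (auto simp: is_basis_of_def subset_iff intro!: sum.cong)
    also have "\<dots> = (\<Sum>y\<in>U. (\<Sum>b\<in>B. coord B x b * coord U b y) * y R)"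
      by (simp add: sum_distrib_left sum_distrib_right mult.assoc) (rule sum.swap)
    finally show ?thesis .
  qed
  then have "coord U x x = (\<Sum>b\<in>B. coord B x b * coord U b x)"
    using coord_eq[OF U _ x, where c = "\<lambda>y. \<Sum>b\<in>B. coord B x b * coord U b y"] by simp
  then show ?thesis using coord_self[OF U x] by simp
qed

lemma trace_eq_sum_eigenvalues:
  assumes B: "is_basis_of B V" and U: "is_basis_of U V"
    and eig: "\<And>x. x \<in> U \<Longrightarrow> perm_act s x = (\<lambda>R. \<epsilon> x * x R)"
  shows "(\<Sum>b\<in>B. coord B (perm_act s b) b) = (\<Sum>x\<in>U. \<epsilon> x)"
proof -
  have BV: "B \<subseteq> V" and UV: "U \<subseteq> V" using B U by (auto simp: is_basis_of_def)
  define \<alpha> where "\<alpha> b x = coord U b x" for b x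
  define \<beta> where "\<beta> x b = coord B x b" for x b
  have image: "perm_act s b R = (\<Sum>b'\<in>B. (\<Sum>x\<in>U. \<alpha> b x * \<epsilon> x * \<beta> x b') * b' R)"
    if b: "b \<in> B" for b R
  proof -
    have "perm_act s b R = (\<Sum>x\<in>U. \<alpha> b x * x (R \<circ> s))"
      using coord_expansion[OF U] b BV by (auto simp: perm_act_def \<alpha>_def)
    also have "\<dots> = (\<Sum>x\<in>U. \<alpha> b x * (\<epsilon> x * (\<Sum>b'\<in>B. \<beta> x b' * b' R)))"
      using coord_expansion[OF B] eig UV
      by (intro sum.cong refl) (auto simp: perm_act_def fun_eq_iff \<beta>_def)
    also have "\<dots> = (\<Sum>b'\<in>B. (\<Sum>x\<in>U. \<alpha> b x * \<epsilon> x * \<beta> x b') * b' R)"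
      by (simp add: sum_distrib_left sum_distrib_right mult.assoc) (rule sum.swap)
    finally show ?thesis .
  qed
  have "coord B (perm_act s b) b = (\<Sum>x\<in>U. \<alpha> b x * \<epsilon> x * \<beta> x b)" if "b \<in> B" for b
    by (rule coord_eq[OF B _ that]) (use image[OF that] in simp)
  then have "(\<Sum>b\<in>B. coord B (perm_act s b) b) = (\<Sum>b\<in>B. \<Sum>x\<in>U. \<alpha> b x * \<epsilon> x * \<beta> x b)"
    by simp
  also have "\<dots> = (\<Sum>x\<in>U. \<epsilon> x * (\<Sum>b\<in>B. \<beta> x b * \<alpha> b x))"
    by (subst sum.swap) (simp add: sum_distrib_left algebra_simps)
  also have "\<dots> = (\<Sum>x\<in>U. \<epsilon> x)"
    using coord_change_of_basis_diag[OF B U] by (simp add: \<alpha>_def \<beta>_def)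
  finally show ?thesis .
qed

lemma independent_leading_terms:
  fixes v :: "'i \<Rightarrow> 'a \<Rightarrow> real" and \<kappa> :: "'a \<Rightarrow> nat"
  assumes fin: "finite I" and lead: "\<And>i. i \<in> I \<Longrightarrow> v i (M i) \<noteq> 0"
    and supp: "\<And>i R. i \<in> I \<Longrightarrow> v i R \<noteq> 0 \<Longrightarrow> \<kappa> (M i) \<le> \<kappa> R"
    and inj: "inj_on (\<kappa> \<circ> M) I"
    and zero: "\<forall>R. (\<Sum>i\<in>I. c i * v i R) = 0"
  shows "\<forall>i\<in>I. c i = 0"
proof (rule ccontr)
  assume "\<not> ?thesis"
  then obtain i where "i \<in> I \<and> c i \<noteq> 0" by blast
  from ex_has_least_nat[of "\<lambda>i. i \<in> I \<and> c i \<noteq> 0", OF this, of "\<kappa> \<circ> M"]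
  obtain i0 where i0: "i0 \<in> I" "c i0 \<noteq> 0"
    and least: "\<And>i. i \<in> I \<Longrightarrow> c i \<noteq> 0 \<Longrightarrow> \<kappa> (M i0) \<le> \<kappa> (M i)"
    by auto
  have others: "c i * v i (M i0) = 0" if i: "i \<in> I - {i0}" for i
  proof (rule ccontr)
    assume "c i * v i (M i0) \<noteq> 0"
    then have "\<kappa> (M i) \<le> \<kappa> (M i0)" "\<kappa> (M i0) \<le> \<kappa> (M i)" using supp least i by auto
    then have "i = i0" using inj i i0(1) by (auto simp: inj_on_def)
    with i show False by simp
  qed
  have "(\<Sum>i\<in>I - {i0}. c i * v i (M i0)) = 0" using others by (intro sum.neutral) blast
  then have "(\<Sum>i\<in>I. c i * v i (M i0)) = c i0 * v i0 (M i0)"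
    using sum.remove[OF fin i0(1), of "\<lambda>i. c i * v i (M i0)"] by simp
  then show False using zero i0 lead[OF i0(1)] by simp
qed

lemma inj_on_leading_terms:
  fixes v :: "'i \<Rightarrow> 'a \<Rightarrow> real" and \<kappa> :: "'a \<Rightarrow> nat"
  assumes lead: "\<And>i. i \<in> I \<Longrightarrow> v i (M i) \<noteq> 0"
    and supp: "\<And>i R. i \<in> I \<Longrightarrow> v i R \<noteq> 0 \<Longrightarrow> \<kappa> (M i) \<le> \<kappa> R"
    and inj: "inj_on (\<kappa> \<circ> M) I"
  shows "inj_on v I"
proof (rule inj_onI)
  fix i j assume ij: "i \<in> I" "j \<in> I" "v i = v j"
  have "\<kappa> (M j) \<le> \<kappa> (M i)" using supp[OF ij(2), of "M i"] lead[OF ij(1)] ij(3) by simp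
  moreover have "\<kappa> (M i) \<le> \<kappa> (M j)" using supp[OF ij(1), of "M j"] lead[OF ij(2)] ij(3) by simp
  ultimately show "i = j" using inj ij(1,2) by (auto simp: inj_on_def)
qed

context partition_shape
begin

lemma specht_char_eigenbasis:
  assumes U: "is_basis_of U (specht n lam)"
    and eig: "\<And>x. x \<in> U \<Longrightarrow> perm_act s x = (\<lambda>R. \<epsilon> x * x R)"
  shows "specht_char n lam s = (\<Sum>x\<in>U. \<epsilon> x)"
proof -
  define B where "B = (SOME B. is_basis_of B (specht n lam))"
  have B: "is_basis_of B (specht n lam)" unfolding B_def using U by (rule someI)
  show ?thesis unfolding specht_char_def Let_def B_def[symmetric]
    by (rule trace_eq_sum_eigenvalues[OF B U eig])
qed

definition leading_tabloid :: "((nat \<Rightarrow> nat) \<Rightarrow> real) \<Rightarrow> (nat \<Rightarrow> nat) \<Rightarrow> bool" where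
  "leading_tabloid v M \<longleftrightarrow> v M \<noteq> 0 \<and> (\<forall>R. v R \<noteq> 0 \<longrightarrow> lex_code n M \<le> lex_code n R)"

lemma lex_code_tab_inj:
  assumes "u \<in> T" "w \<in> T" "lex_code n (tab u) = lex_code n (tab w)"
  shows "tab u = tab w"
proof (rule ext)
  fix k
  have "\<forall>k\<in>{1..n}. tab u k = tab w k"
    by (rule lex_code_inj) (use tab_le assms in auto)
  then show "tab u k = tab w k" by (cases "k \<in> {1..n}") (auto simp: tab_eq_row)
qed

lemma inj_on_lex_code_tab_SYT: "inj_on (lex_code n \<circ> tab) SYT"
  using lex_code_tab_inj row_increasing_tab_inj by (auto simp: inj_on_def SYT_def)

lemma finite_SYT: "finite SYT"
  using finite_tableaux by (rule finite_subset[rotated]) (auto simp: SYT_def)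

lemma independent_standard_leading:
  assumes J: "J \<subseteq> SYT" and lead: "\<And>t. t \<in> J \<Longrightarrow> leading_tabloid (v t) (tab t)"
  shows "lin_indep (v ` J)" and "inj_on v J"
proof -
  have fin: "finite J" using finite_subset[OF J finite_SYT] .
  have inj: "inj_on (lex_code n \<circ> tab) J" using inj_on_subset[OF inj_on_lex_code_tab_SYT J] .
  show inj_v: "inj_on v J"
    by (rule inj_on_leading_terms[OF _ _ inj]) (use lead in \<open>auto simp: leading_tabloid_def\<close>)
  show "lin_indep (v ` J)" unfolding lin_indep_def
  proof (intro allI impI)
    fix c assume "\<forall>R. (\<Sum>b\<in>v ` J. c b * b R) = 0"
    then have zero: "\<forall>R. (\<Sum>t\<in>J. c (v t) * v t R) = 0" by (simp add: sum.reindex[OF inj_v])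
    have "\<forall>t\<in>J. c (v t) = 0"
      by (rule independent_leading_terms[OF fin _ _ inj zero])
         (use lead in \<open>auto simp: leading_tabloid_def\<close>)
    then show "\<forall>b\<in>v ` J. c b = 0" by blast
  qed
qed

definition sym_polytabloid :: "(nat \<Rightarrow> nat) \<Rightarrow> real \<Rightarrow> ((nat \<times> nat) \<Rightarrow> nat) \<Rightarrow> (nat \<Rightarrow> nat) \<Rightarrow> real" where
  "sym_polytabloid s \<epsilon> t = (\<lambda>R. e t R + \<epsilon> * e (s \<circ> t) R)"

lemma e_cong: "(\<And>x. x \<in> Y \<Longrightarrow> f x = g x) \<Longrightarrow> e f = e g"
  by (metis e_restrict restrict_ext)

lemma sym_polytabloid_in_specht:
  assumes t: "t \<in> T" and s: "s permutes {1..n}"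
  shows "sym_polytabloid s \<epsilon> t \<in> specht n lam"
  using specht_add[OF e_in_specht[OF t] e_in_specht[OF restrict_perm_tableau[OF t s]]]
  by (simp add: sym_polytabloid_def e_restrict)

lemma perm_act_sym_polytabloid:
  assumes t: "t \<in> T" and s: "s permutes {1..n}" "\<And>k. s (s k) = k" and \<epsilon>: "\<epsilon> * \<epsilon> = 1"
  shows "perm_act s (sym_polytabloid s \<epsilon> t) = (\<lambda>R. \<epsilon> * sym_polytabloid s \<epsilon> t R)"
proof -
  let ?u = "restrict (s \<circ> t) Y"
  have u: "?u \<in> T" by (rule restrict_perm_tableau[OF t s(1)])
  have "e (s \<circ> ?u) = e t" by (rule e_cong) (simp add: s(2))
  then have "perm_act s (e ?u) = e t" by (simp add: perm_act_polytabloid[OF u s(1)])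
  moreover have "perm_act s (e t) = e ?u" by (simp add: perm_act_polytabloid[OF t s(1)] e_restrict)
  ultimately show ?thesis using \<epsilon>
    by (simp add: sym_polytabloid_def perm_act_def fun_eq_iff e_restrict algebra_simps)
qed

text \<open>An involution with enough eigenvectors: if the \<open>\<pm>1\<close>-symmetrised polytabloids of the
  tableaux in \<open>Jp\<close> and \<open>Jm\<close> have distinct leading tabloids and there are as many of them as
  standard tableaux, they form an eigenbasis of the Specht module.\<close>

theorem specht_char_involution:
  assumes s: "s permutes {1..n}" "\<And>k. s (s k) = k"
    and J: "Jp \<subseteq> SYT" "Jm \<subseteq> SYT" "card Jp + card Jm = card SYT"
    and lead_p: "\<And>t. t \<in> Jp \<Longrightarrow> leading_tabloid (sym_polytabloid s 1 t) (tab t)"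
    and lead_m: "\<And>t. t \<in> Jm \<Longrightarrow> leading_tabloid (sym_polytabloid s (-1) t) (tab t)"
  shows "specht_char n lam id = real (card SYT)"
    and "specht_char n lam s = real (card Jp) - real (card Jm)"
proof -
  define Wp where "Wp = (\<lambda>t. sym_polytabloid s 1 t) ` Jp"
  define Wm where "Wm = (\<lambda>t. sym_polytabloid s (-1) t) ` Jm"
  define U where "U = Wp \<union> Wm"
  note indep_p = independent_standard_leading[of Jp "sym_polytabloid s 1", OF J(1) lead_p]
  note indep_m = independent_standard_leading[of Jm "sym_polytabloid s (-1)", OF J(2) lead_m]
  have fin: "finite Jp" "finite Jm" using J finite_SYT finite_subset by blast+
  have finU: "finite U" using fin by (simp add: U_def Wp_def Wm_def)
  have US: "U \<subseteq> specht n lam"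
    using J s sym_polytabloid_in_specht by (auto simp: U_def Wp_def Wm_def SYT_def)
  have eig_p: "x (R \<circ> s) = x R" if "x \<in> Wp" for x R
    using that J(1) perm_act_sym_polytabloid[OF _ s, of _ 1]
    by (auto simp: Wp_def SYT_def perm_act_def fun_eq_iff)
  have eig_m: "x (R \<circ> s) = - x R" if "x \<in> Wm" for x R
    using that J(2) perm_act_sym_polytabloid[OF _ s, of _ "-1"]
    by (auto simp: Wm_def SYT_def perm_act_def fun_eq_iff)
  have disj: "Wp \<inter> Wm = {}"
  proof (rule ccontr)
    assume "Wp \<inter> Wm \<noteq> {}"
    then obtain t where t: "t \<in> Jm" "sym_polytabloid s (-1) t \<in> Wp" by (auto simp: Wm_def)
    moreover have "sym_polytabloid s (-1) t \<in> Wm" using t(1) by (simp add: Wm_def)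
    ultimately have "sym_polytabloid s (-1) t (tab t) = 0"
      using eig_p[of _ "tab t"] eig_m[of _ "tab t"] by (metis equal_neg_zero)
    with lead_m[OF t(1)] show False by (simp add: leading_tabloid_def)
  qed
  have cardU: "card U = card SYT"
    using card_Un_disjoint[of Wp Wm] disj fin J(3) indep_p(2) indep_m(2)
    by (simp add: U_def Wp_def Wm_def card_image)
  have li: "lin_indep U" unfolding lin_indep_def
  proof (intro allI impI)
    fix c assume z: "\<forall>R. (\<Sum>x\<in>U. c x * x R) = 0"
    define a where "a R = (\<Sum>x\<in>Wp. c x * x R)" for R
    define b where "b R = (\<Sum>x\<in>Wm. c x * x R)" for R
    have ab: "a R + b R = 0" for R
      using z disj fin unfolding a_def b_def U_def Wp_def Wm_def by (simp add: sum.union_disjoint)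
    have sym: "a (R \<circ> s) = a R" "b (R \<circ> s) = - b R" for R
      unfolding a_def b_def sum_negf[symmetric] by (auto intro!: sum.cong simp: eig_p eig_m)
    have "a R = 0 \<and> b R = 0" for R using ab[of R] ab[of "R \<circ> s"] sym[of R] by linarith
    then have "\<forall>R. a R = 0" "\<forall>R. b R = 0" by simp_all
    then have "\<forall>x\<in>Wp. c x = 0" "\<forall>x\<in>Wm. c x = 0"
      using indep_p(1) indep_m(1) unfolding lin_indep_def a_def b_def Wp_def Wm_def by blast+
    then show "\<forall>x\<in>U. c x = 0" unfolding U_def by blast
  qed
  have fun_vs_indep: "fun_vs.independent U"
  proof
    assume dep: "fun_vs.dependent U"
    obtain u where u: "\<exists>v\<in>U. u v \<noteq> 0" "(\<Sum>v\<in>U. (\<lambda>x. u v * v x)) = 0"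
      using iffD1[OF fun_vs.dependent_finite[OF finU] dep] by (elim exE conjE)
    have "\<forall>R. (\<Sum>v\<in>U. u v * v R) = 0" using fun_cong[OF u(2)] by (simp add: sum_fun_apply)
    with li u(1) show False unfolding lin_indep_def by blast
  qed
  have spans: "specht n lam \<subseteq> fun_vs.span U"
  proof
    fix w assume w: "w \<in> specht n lam"
    show "w \<in> fun_vs.span U"
    proof (rule ccontr)
      assume nw: "w \<notin> fun_vs.span U"
      have "insert w U \<subseteq> fun_vs.span (e ` SYT)" using w US unfolding specht_eq_standard_span by blast
      then have "card (insert w U) \<le> card (e ` SYT)"
        using fun_vs.independent_span_bound[OF _ fun_vs.independent_insertI[OF nw fun_vs_indep]]
          finite_SYT by simp
      also have "\<dots> \<le> card U" using finite_SYT card_image_le cardU by simp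
      finally show False using nw fun_vs.span_base finU by (simp add: card_insert_if split: if_splits)
    qed
  qed
  have basis: "is_basis_of U (specht n lam)" unfolding is_basis_of_def
  proof (intro conjI ballI finU US li)
    fix w assume "w \<in> specht n lam"
    then obtain u where "w = (\<Sum>v\<in>U. (\<lambda>x. u v * v x))"
      using spans fun_vs.span_finite[OF finU] by blast
    then show "\<exists>c. \<forall>R. w R = (\<Sum>b\<in>U. c b * b R)" by (intro exI[of _ u]) (simp add: sum_fun_apply)
  qed
  have "specht_char n lam id = (\<Sum>x\<in>U. 1)"
    by (rule specht_char_eigenbasis[OF basis]) (simp add: perm_act_def)
  then show "specht_char n lam id = real (card SYT)" using cardU by simp
  have "specht_char n lam s = (\<Sum>x\<in>U. if x \<in> Wm then -1 else 1)"
    by (rule specht_char_eigenbasis[OF basis])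
       (use eig_p eig_m in \<open>auto simp: perm_act_def fun_eq_iff U_def\<close>)
  also have "\<dots> = (\<Sum>x\<in>Wp. if x \<in> Wm then -1 else 1) + (\<Sum>x\<in>Wm. if x \<in> Wm then -1 else 1)"
    unfolding U_def by (rule sum.union_disjoint) (use fin disj in \<open>auto simp: Wp_def Wm_def\<close>)
  also have "\<dots> = real (card Wp) - real (card Wm)"
    using disj by (simp add: disjoint_iff)
  finally show "specht_char n lam s = real (card Jp) - real (card Jm)"
    using indep_p(2) indep_m(2) by (simp add: Wp_def Wm_def card_image)
qed

lemma tab_restrict_involution:
  assumes t: "t \<in> T" and p: "p permutes {1..n}" "\<And>k. p (p k) = k"
  shows "tab (restrict (p \<circ> t) Y) = tab t \<circ> p"
proof -
  have "inv p = p" using p(2) by (intro inv_unique_comp) (auto simp: fun_eq_iff)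
  then show ?thesis by (simp add: tab_restrict tab_perm[OF t p(1)])
qed

lemma col_restrict_involution:
  assumes t: "t \<in> T" and p: "p permutes {1..n}" "\<And>k. p (p k) = k" and k: "k \<in> {1..n}"
  shows "col (restrict (p \<circ> t) Y) k = col t (p k)"
proof -
  have "inv p = p" using p(2) by (intro inv_unique_comp) (auto simp: fun_eq_iff)
  then show ?thesis using col_perm[OF t p(1) k] by (simp add: col_def cell_restrict)
qed

lemma col_increasing_perm_prefix:
  assumes t: "t \<in> T" and ci: "col_increasing t" and p: "p permutes {1..m}"
    and sorted: "\<And>a b. a \<in> {1..m} \<Longrightarrow> b \<in> {1..m} \<Longrightarrow> a < b \<Longrightarrow> col t a = col t b \<Longrightarrow> p a < p b"
  shows "col_increasing (restrict (p \<circ> t) Y)"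
  unfolding col_increasing_def
proof (intro allI impI)
  fix i i' j assume x: "(i, j) \<in> Y" and y: "(i', j) \<in> Y" and ii: "i < i'"
  define a where "a = t (i, j)"
  define b where "b = t (i', j)"
  have ab: "a < b" using ci x y ii unfolding col_increasing_def a_def b_def by blast
  have "1 \<le> a" using tableau_in_range[OF t x] by (simp add: a_def)
  have "p a < p b"
  proof (cases "b \<le> m")
    case True
    have "col t a = col t b" using col_cell[OF t x] col_cell[OF t y] by (simp add: a_def b_def)
    then show ?thesis using sorted \<open>1 \<le> a\<close> ab True by simp
  next
    case False
    then have "p b = b" using permutes_not_in[OF p] by simp
    moreover have "p a < b"
      using False ab permutes_not_in[OF p, of a] permutes_in_image[OF p, of a]
      by (cases "a \<le> m") auto
    ultimately show ?thesis by simp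
  qed
  then show "restrict (p \<circ> t) Y (i, j) < restrict (p \<circ> t) Y (i', j)"
    using x y by (simp add: a_def b_def)
qed

lemma tab_perm_prefix_eq_iff:
  assumes t: "t \<in> T" and \<rho>: "\<rho> permutes {1..m}" "\<And>k. \<rho> (\<rho> k) = k" and m: "m \<le> n"
  shows "tab (restrict (\<rho> \<circ> t) Y) = tab t \<longleftrightarrow> map (row t) [1..<Suc m] = map (row t \<circ> \<rho>) [1..<Suc m]"
proof -
  have \<rho>n: "\<rho> permutes {1..n}" using permutes_subset[OF \<rho>(1)] m by simp
  have "tab t \<circ> \<rho> = tab t \<longleftrightarrow> (\<forall>k\<in>{1..m}. row t (\<rho> k) = row t k)"
  proof
    assume eq: "tab t \<circ> \<rho> = tab t"
    show "\<forall>k\<in>{1..m}. row t (\<rho> k) = row t k"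
    proof
      fix k assume k: "k \<in> {1..m}"
      then have "\<rho> k \<in> {1..m}" using permutes_in_image[OF \<rho>(1)] by simp
      then show "row t (\<rho> k) = row t k" using fun_cong[OF eq, of k] k m by (simp add: tab_eq_row)
    qed
  next
    assume rows: "\<forall>k\<in>{1..m}. row t (\<rho> k) = row t k"
    show "tab t \<circ> \<rho> = tab t"
    proof
      fix k
      show "(tab t \<circ> \<rho>) k = tab t k"
      proof (cases "k \<in> {1..m}")
        case True
        then have "\<rho> k \<in> {1..m}" using permutes_in_image[OF \<rho>(1)] by simp
        then show ?thesis using rows True m by (simp add: tab_eq_row)
      qed (simp add: permutes_not_in[OF \<rho>(1)])
    qed
  qed
  moreover have "map (row t) [1..<Suc m] = map (row t \<circ> \<rho>) [1..<Suc m] \<longleftrightarrow>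
      (\<forall>k\<in>{1..m}. row t (\<rho> k) = row t k)"
    by (auto simp: atLeastLessThanSuc_atLeastAtMost simp del: upt_Suc)
  ultimately show ?thesis by (simp add: tab_restrict_involution[OF t \<rho>n \<rho>(2)])
qed

lemma lex_code_tab_perm_prefix_less:
  assumes t: "t \<in> T" and \<rho>: "\<rho> permutes {1..m}" "\<And>k. \<rho> (\<rho> k) = k" and m: "m \<le> n"
    and less: "map (row t) [1..<Suc m] < map (row t \<circ> \<rho>) [1..<Suc m]"
  shows "lex_code n (tab t) < lex_code n (tab (restrict (\<rho> \<circ> t) Y))"
proof -
  have \<rho>n: "\<rho> permutes {1..n}" using permutes_subset[OF \<rho>(1)] m by simp
  obtain i where i: "i < m"
    and prefix: "take i (map (row t) [1..<Suc m]) = take i (map (row t \<circ> \<rho>) [1..<Suc m])"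
    and first: "row t (Suc i) < row t (\<rho> (Suc i))"
    using less unfolding list_less_def lexord_take_index_conv by (auto simp del: upt_Suc)
  show ?thesis unfolding tab_restrict_involution[OF t \<rho>n \<rho>(2)]
  proof (rule lex_code_less[of _ _ "Suc i"])
    show "tab t k \<le> n" if "k \<in> {1..n}" for k using tab_le[OF t that] .
    show "Suc i \<in> {1..n}" using i m by simp
    show "tab t k = (tab t \<circ> \<rho>) k" if "k \<in> {1..n}" "k < Suc i" for k
    proof -
      have "k - 1 < i" using that by auto
      then have "map (row t) [1..<Suc m] ! (k - 1) = map (row t \<circ> \<rho>) [1..<Suc m] ! (k - 1)"
        using prefix by (metis nth_take)
      then have "row t k = row t (\<rho> k)" using that i by (simp del: upt_Suc)
      then show ?thesis using that perm_in_range[OF \<rho>n] by (simp add: tab_eq_row)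
    qed
    show "tab t (Suc i) < (tab t \<circ> \<rho>) (Suc i)"
      using first i m perm_in_range[OF \<rho>n, of "Suc i"] by (simp add: tab_eq_row)
  qed
qed

text \<open>The symmetrised polytabloid of a standard tableau has leading tabloid \<open>{t}\<close> as soon as
  \<open>s\<close> becomes a column permutation after composing with a suitable involution \<open>\<rho>\<close> of the
  entries \<open>1..m\<close>: then \<open>e (s t) = \<plusminus>e (\<rho> t)\<close>, where \<open>\<rho> t\<close> is column-increasing with tabloid
  not below \<open>{t}\<close>.\<close>

lemma leading_tabloid_sym_polytabloid:
  assumes t: "t \<in> SYT" and m: "m \<le> n"
    and s: "s permutes {1..m}" "\<And>k. s (s k) = k"
    and \<rho>: "\<rho> permutes {1..m}" "\<And>k. \<rho> (\<rho> k) = k"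
    and sorted: "\<And>a b. a \<in> {1..m} \<Longrightarrow> b \<in> {1..m} \<Longrightarrow> a < b \<Longrightarrow> col t a = col t b \<Longrightarrow> \<rho> a < \<rho> b"
    and stab: "\<And>k. k \<in> {1..m} \<Longrightarrow> col t (\<rho> (s (\<rho> k))) = col t (\<rho> k)"
    and rows: "map (row t) [1..<Suc m] \<le> map (row t \<circ> \<rho>) [1..<Suc m]"
    and tie: "map (row t) [1..<Suc m] = map (row t \<circ> \<rho>) [1..<Suc m] \<Longrightarrow> \<epsilon> = of_int (sign (s \<circ> \<rho>))"
    and \<epsilon>: "\<epsilon> = 1 \<or> \<epsilon> = -1"
  shows "leading_tabloid (sym_polytabloid s \<epsilon> t) (tab t)"
proof -
  have tT: "t \<in> T" and ci: "col_increasing t" using t by (auto simp: SYT_def)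
  have \<rho>n: "\<rho> permutes {1..n}" and sn: "s permutes {1..n}"
    using permutes_subset[OF \<rho>(1)] permutes_subset[OF s(1)] m by auto
  define u where "u = restrict (\<rho> \<circ> t) Y"
  define \<sigma> :: real where "\<sigma> = of_int (sign (s \<circ> \<rho>))"
  have uT: "u \<in> T" unfolding u_def by (rule restrict_perm_tableau[OF tT \<rho>n])
  have cu: "col_increasing u" unfolding u_def by (rule col_increasing_perm_prefix[OF tT ci \<rho>(1) sorted])
  have "s \<circ> \<rho> \<in> CS u"
  proof -
    have "col t (\<rho> (s (\<rho> k))) = col t (\<rho> k)" for k
      using stab permutes_not_in[OF \<rho>(1)] permutes_not_in[OF s(1)] by (cases "k \<in> {1..m}") auto
    then show ?thesis
      using permutes_compose[OF \<rho>n sn] perm_in_range[OF permutes_compose[OF \<rho>n sn]]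
      by (simp add: CS_altdef u_def col_restrict_involution[OF tT \<rho>n \<rho>(2)])
  qed
  moreover have "e (s \<circ> t) = e ((s \<circ> \<rho>) \<circ> u)" by (rule e_cong) (simp add: u_def \<rho>(2))
  ultimately have v: "sym_polytabloid s \<epsilon> t R = e t R + \<epsilon> * \<sigma> * e u R" for R
    using e_col_stab[OF uT] by (simp add: sym_polytabloid_def \<sigma>_def)
  note lead_t = polytabloid_leading[OF tT ci] and lead_u = polytabloid_leading[OF uT cu]
  have "lex_code n (tab t) \<le> lex_code n (tab u)"
  proof (cases "map (row t) [1..<Suc m] = map (row t \<circ> \<rho>) [1..<Suc m]")
    case True
    then show ?thesis using tab_perm_prefix_eq_iff[OF tT \<rho> m] by (simp add: u_def)
  next
    case False
    then have "map (row t) [1..<Suc m] < map (row t \<circ> \<rho>) [1..<Suc m]"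
      using rows by (rule order.not_eq_order_implies_strict)
    then show ?thesis using lex_code_tab_perm_prefix_less[OF tT \<rho> m] by (simp add: u_def)
  qed
  then have supp: "lex_code n (tab t) \<le> lex_code n R" if "sym_polytabloid s \<epsilon> t R \<noteq> 0" for R
    using that v[of R] lead_t(2)[of R] lead_u(2)[of R] by fastforce
  have "sym_polytabloid s \<epsilon> t (tab t) \<noteq> 0"
  proof (cases "tab u = tab t")
    case True
    then have "\<epsilon> = \<sigma>" using tie tab_perm_prefix_eq_iff[OF tT \<rho> m] by (simp add: u_def \<sigma>_def)
    then show ?thesis using v \<epsilon> lead_t(1) lead_u(1) True by auto
  next
    case False
    with \<open>lex_code n (tab t) \<le> lex_code n (tab u)\<close> have "lex_code n (tab t) < lex_code n (tab u)"
      using lex_code_tab_inj[OF tT uT] by fastforce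
    then have "e u (tab t) = 0" using lead_u(2)[of "tab t"] False by auto
    then show ?thesis using v lead_t(1) by simp
  qed
  with supp show ?thesis by (simp add: leading_tabloid_def)
qed

end

definition list_filling :: "(nat \<times> nat) list \<Rightarrow> (nat \<times> nat) \<Rightarrow> nat" where
  "list_filling ps = restrict (\<lambda>x. Suc (the_inv_into {..<length ps} ((!) ps) x)) (set ps)"

lemma list_filling_nth:
  assumes "distinct ps" "i < length ps"
  shows "list_filling ps (ps ! i) = Suc i"
  using assms by (simp add: list_filling_def the_inv_into_f_f inj_on_nth)

lemma list_filling_standard:
  assumes d: "distinct ps" and sorted: "sorted_wrt (\<lambda>x y. \<not> (fst y \<le> fst x \<and> snd y \<le> snd x)) ps"
  shows "list_filling ps \<in> standard_fillings (set ps)"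
proof -
  have less: "list_filling ps x < list_filling ps y"
    if x: "x \<in> set ps" and y: "y \<in> set ps" and xy: "x \<noteq> y" "fst x \<le> fst y" "snd x \<le> snd y" for x y
  proof -
    obtain a b where ab: "a < length ps" "b < length ps" "x = ps ! a" "y = ps ! b"
      using x y by (auto simp: in_set_conv_nth)
    have "\<not> b < a" using sorted_wrt_nth_less[OF sorted, of b a] ab xy(2,3) by auto
    moreover have "a \<noteq> b" using ab xy(1) by auto
    ultimately show ?thesis using ab list_filling_nth[OF d] by simp
  qed
  have "bij_betw (list_filling ps) (set ps) {1..length ps}"
  proof (rule bij_betw_byWitness[where f' = "\<lambda>k. ps ! (k - 1)"])
    show "\<forall>x\<in>set ps. ps ! (list_filling ps x - 1) = x"
    proof
      fix x assume "x \<in> set ps"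
      then obtain i where "i < length ps" "x = ps ! i" by (metis in_set_conv_nth)
      then show "ps ! (list_filling ps x - 1) = x" using list_filling_nth[OF d] by simp
    qed
    show "\<forall>k\<in>{1..length ps}. list_filling ps (ps ! (k - 1)) = k"
      using list_filling_nth[OF d] by auto
    show "list_filling ps ` set ps \<subseteq> {1..length ps}"
    proof
      fix k assume "k \<in> list_filling ps ` set ps"
      then obtain i where "i < length ps" "k = list_filling ps (ps ! i)"
        by (metis imageE in_set_conv_nth)
      then show "k \<in> {1..length ps}" using list_filling_nth[OF d] by simp
    qed
    show "(\<lambda>k. ps ! (k - 1)) ` {1..length ps} \<subseteq> set ps" by auto
  qed
  then show ?thesis
    using less d by (auto simp: standard_fillings_def list_filling_def distinct_card)
qed

definition addable :: "(nat \<times> nat) set \<Rightarrow> nat \<times> nat \<Rightarrow> bool" where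
  "addable S x \<longleftrightarrow> x \<notin> S \<and> (0 < fst x \<longrightarrow> (fst x - 1, snd x) \<in> S) \<and> (0 < snd x \<longrightarrow> (fst x, snd x - 1) \<in> S)"

lemma addable_cases:
  assumes "addable S x"
  shows "x = (0, 0) \<or> (\<exists>(i, j)\<in>S. x = (Suc i, j) \<or> x = (i, Suc j))"
proof (cases x)
  case (Pair i j)
  show ?thesis
  proof (cases i)
    case (Suc i')
    then have "(i', j) \<in> S" using assms Pair by (simp add: addable_def)
    then show ?thesis using Pair Suc by blast
  next
    case 0
    show ?thesis
    proof (cases j)
      case (Suc j')
      then have "(i, j') \<in> S" using assms Pair by (simp add: addable_def)
      then show ?thesis using Pair Suc by blast
    qed (simp add: Pair 0)
  qed
qed

lemma s1_eq_transpose: "s1 = Transposition.transpose 1 2"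
  by (auto simp: s1_def fun_eq_iff transpose_def)

lemma s3_eq_transpose: "s3 = Transposition.transpose 3 4"
  by (auto simp: s3_def fun_eq_iff transpose_def)

lemma s1_apply: "s1 k = (if k = 1 then 2 else if k = 2 then 1 else k)"
  and s3_apply: "s3 k = (if k = 3 then 4 else if k = 4 then 3 else k)"
  by (simp_all add: s1_def s3_def)

lemma s1_s1 [simp]: "s1 (s1 k) = k" and s3_s3 [simp]: "s3 (s3 k) = k"
  by (simp_all add: s1_apply s3_apply)

lemma sign_s1: "sign s1 = -1" and sign_s3: "sign s3 = -1"
  by (simp_all add: s1_eq_transpose s3_eq_transpose sign_swap_id)

context partition_shape
begin

definition SYT_extending :: "(nat \<times> nat) set \<Rightarrow> ((nat \<times> nat) \<Rightarrow> nat) \<Rightarrow> ((nat \<times> nat) \<Rightarrow> nat) set" where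
  "SYT_extending N F = {t \<in> SYT. \<forall>x\<in>N. t x = F x}"

context
  fixes N :: "(nat \<times> nat) set" and F :: "(nat \<times> nat) \<Rightarrow> nat"
  assumes N_sub: "N \<subseteq> Y"
    and N_down: "\<And>i j i' j'. (i, j) \<in> N \<Longrightarrow> i' \<le> i \<Longrightarrow> j' \<le> j \<Longrightarrow> (i', j') \<in> N"
    and F: "F \<in> standard_fillings N"
begin

lemma finite_N: "finite N"
  using finite_subset[OF N_sub finite_cells] .

lemma F_bij: "bij_betw F N {1..card N}"
  using F by (simp add: standard_fillings_def)

lemma SYT_extending_above:
  assumes t: "t \<in> SYT_extending N F" and x: "x \<in> Y - N"
  shows "card N < t x"
proof (rule ccontr)
  have tT: "t \<in> T" using t by (simp add: SYT_extending_def SYT_def)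
  assume "\<not> card N < t x"
  then have "t x \<in> F ` N" using tableau_in_range[OF tT] x F_bij by (auto simp: bij_betw_def)
  then obtain y where y: "y \<in> N" "F y = t x" by auto
  then have "t y = t x" using t by (simp add: SYT_extending_def)
  then have "y = x" using tableau_inj[OF tT] y(1) x N_sub by blast
  with x y show False by simp
qed

lemma skew_part_standard:
  assumes t: "t \<in> SYT_extending N F"
  shows "restrict (\<lambda>x. t x - card N) (Y - N) \<in> standard_fillings (Y - N)"
proof -
  let ?m = "card N" and ?u = "restrict (\<lambda>x. t x - card N) (Y - N)"
  have tT: "t \<in> T" and ci: "col_increasing t" and ri: "row_increasing t"
    using t by (auto simp: SYT_extending_def SYT_def)
  have card: "card (Y - N) = n - ?m" using card_Diff_subset[OF finite_N N_sub] card_diagram by simp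
  note above = SYT_extending_above[OF t]
  have "inj_on ?u (Y - N)"
  proof (rule inj_onI)
    fix x y assume x: "x \<in> Y - N" and y: "y \<in> Y - N" and "?u x = ?u y"
    then have "t x = t y" using above[OF x] above[OF y] by simp
    then show "x = y" using tableau_inj[OF tT] x y by auto
  qed
  moreover have "?u ` (Y - N) = {1..card (Y - N)}"
  proof
    show "?u ` (Y - N) \<subseteq> {1..card (Y - N)}"
      using above tableau_in_range[OF tT] card by fastforce
    show "{1..card (Y - N)} \<subseteq> ?u ` (Y - N)"
    proof
      fix k assume k: "k \<in> {1..card (Y - N)}"
      then have "k + ?m \<in> t ` Y"
        using card tableauD(1)[OF tT] card_mono[OF finite_cells N_sub] card_diagram
        by (auto simp: bij_betw_def)
      then obtain x where x: "x \<in> Y" "t x = k + ?m" by (metis imageE)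
      have "x \<notin> N"
      proof
        assume "x \<in> N"
        then have "t x \<le> ?m" using t F_bij by (auto simp: SYT_extending_def bij_betw_def)
        with x k show False by simp
      qed
      then show "k \<in> ?u ` (Y - N)" using x by (intro image_eqI[of _ _ x]) auto
    qed
  qed
  moreover have "?u (i, j) < ?u (i, j')"
    if "(i, j) \<in> Y - N" "(i, j') \<in> Y - N" "j < j'" for i j j'
  proof -
    have "t (i, j) < t (i, j')" using ri that unfolding row_increasing_def by blast
    then show ?thesis using that above[OF that(1)] above[OF that(2)] by simp
  qed
  moreover have "?u (i, j) < ?u (i', j)"
    if "(i, j) \<in> Y - N" "(i', j) \<in> Y - N" "i < i'" for i i' j
  proof -
    have "t (i, j) < t (i', j)" using ci that unfolding col_increasing_def by blast
    then show ?thesis using that above[OF that(1)] above[OF that(2)] by simp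
  qed
  ultimately show ?thesis by (simp add: standard_fillings_def bij_betw_def)
qed

text \<open>Gluing a standard filling of the skew shape, shifted up by \<open>|N|\<close>, to \<open>F\<close> gives a standard
  tableau; entries compare correctly across the boundary because \<open>N\<close> is down-closed.\<close>

lemma glue_SYT:
  assumes S: "S \<in> standard_fillings (Y - N)"
  shows "restrict (\<lambda>x. if x \<in> N then F x else S x + card N) Y \<in> SYT_extending N F"
proof -
  let ?m = "card N" and ?g = "restrict (\<lambda>x. if x \<in> N then F x else S x + card N) Y"
  have card: "card (Y - N) = n - ?m" using card_Diff_subset[OF finite_N N_sub] card_diagram by simp
  have mn: "?m \<le> n" using card_mono[OF finite_cells N_sub] card_diagram by simp
  have S_bij: "bij_betw S (Y - N) {1..n - ?m}" using S card by (simp add: standard_fillings_def)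
  have F_le: "F x \<le> ?m" if "x \<in> N" for x using that F_bij by (auto simp: bij_betw_def)
  have S_ge: "1 \<le> S x" if "x \<in> Y - N" for x using that S_bij by (auto simp: bij_betw_def)
  have inj: "inj_on ?g Y"
  proof (rule inj_onI)
    fix x y assume x: "x \<in> Y" and y: "y \<in> Y" and eq: "?g x = ?g y"
    consider "x \<in> N" "y \<in> N" | "x \<notin> N" "y \<notin> N" | "x \<in> N \<longleftrightarrow> y \<notin> N" by blast
    then show "x = y"
    proof cases
      case 1 then show ?thesis using eq x y F_bij by (auto simp: bij_betw_def inj_on_def)
    next
      case 2 then show ?thesis using eq x y S_bij by (auto simp: bij_betw_def inj_on_def)
    next
      case 3 then show ?thesis using eq x y F_le S_ge by (cases "x \<in> N") fastforce+
    qed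
  qed
  have img: "?g ` Y = {1..n}"
  proof
    show "?g ` Y \<subseteq> {1..n}"
    proof
      fix k assume "k \<in> ?g ` Y"
      then obtain x where x: "x \<in> Y" "k = ?g x" by blast
      have "F x \<in> {1..?m}" if "x \<in> N" using that F_bij by (auto simp: bij_betw_def)
      moreover have "S x \<in> {1..n - ?m}" if "x \<notin> N" using that x S_bij by (auto simp: bij_betw_def)
      ultimately show "k \<in> {1..n}" using x mn by (cases "x \<in> N") auto
    qed
    show "{1..n} \<subseteq> ?g ` Y"
    proof
      fix k assume k: "k \<in> {1..n}"
      show "k \<in> ?g ` Y"
      proof (cases "k \<le> ?m")
        case True
        then have "k \<in> F ` N" using F_bij k by (simp add: bij_betw_def)
        then obtain x where x: "k = F x" "x \<in> N" by (rule imageE)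
        show ?thesis
        proof (rule image_eqI)
          show "x \<in> Y" using x(2) N_sub by blast
          then show "k = ?g x" using x by simp
        qed
      next
        case False
        then have "k - ?m \<in> {1..n - ?m}" using k by auto
        then have "k - ?m \<in> S ` (Y - N)" using S_bij by (simp add: bij_betw_def)
        then obtain x where x: "k - ?m = S x" "x \<in> Y - N" by (rule imageE)
        show ?thesis
        proof (rule image_eqI)
          show "x \<in> Y" using x(2) by blast
          then show "k = ?g x" using x False by simp
        qed
      qed
    qed
  qed
  have less: "?g x < ?g y" if x: "x \<in> Y" and y: "y \<in> Y"
    and xy: "fst x \<le> fst y" "snd x \<le> snd y"
    and in_N: "x \<in> N \<Longrightarrow> y \<in> N \<Longrightarrow> F x < F y" and out: "x \<notin> N \<Longrightarrow> y \<notin> N \<Longrightarrow> S x < S y" for x y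
  proof -
    consider "x \<in> N" "y \<in> N" | "x \<in> N" "y \<notin> N" | "x \<notin> N" "y \<in> N" | "x \<notin> N" "y \<notin> N"
      by blast
    then show ?thesis
    proof cases
      case 1 then show ?thesis using x y in_N by simp
    next
      case 2 then show ?thesis using F_le[of x] S_ge[of y] x y by simp
    next
      case 3 then show ?thesis using N_down[of "fst y" "snd y" "fst x" "snd x"] xy by simp
    next
      case 4 then show ?thesis using x y out by simp
    qed
  qed
  have F_row: "\<And>i j j'. (i, j) \<in> N \<Longrightarrow> (i, j') \<in> N \<Longrightarrow> j < j' \<Longrightarrow> F (i, j) < F (i, j')"
    and F_col: "\<And>i i' j. (i, j) \<in> N \<Longrightarrow> (i', j) \<in> N \<Longrightarrow> i < i' \<Longrightarrow> F (i, j) < F (i', j)"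
    using F by (simp_all add: standard_fillings_def)
  have S_row: "\<And>i j j'. (i, j) \<in> Y - N \<Longrightarrow> (i, j') \<in> Y - N \<Longrightarrow> j < j' \<Longrightarrow> S (i, j) < S (i, j')"
    and S_col: "\<And>i i' j. (i, j) \<in> Y - N \<Longrightarrow> (i', j) \<in> Y - N \<Longrightarrow> i < i' \<Longrightarrow> S (i, j) < S (i', j)"
    using S by (simp_all add: standard_fillings_def)
  have "row_increasing ?g" unfolding row_increasing_def
  proof (intro allI impI)
    fix i j j' assume a: "(i, j) \<in> Y" "(i, j') \<in> Y" "j < j'"
    show "?g (i, j) < ?g (i, j')" by (rule less) (use a F_row S_row in auto)
  qed
  moreover have "col_increasing ?g" unfolding col_increasing_def
  proof (intro allI impI)
    fix i i' j assume a: "(i, j) \<in> Y" "(i', j) \<in> Y" "i < i'"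
    show "?g (i, j) < ?g (i', j)" by (rule less) (use a F_col S_col in auto)
  qed
  moreover have "?g \<in> T" using inj img by (simp add: tableaux_def bij_betw_def)
  ultimately show ?thesis using N_sub by (auto simp: SYT_extending_def SYT_def)
qed

lemma card_SYT_extending: "card (SYT_extending N F) = card (standard_fillings (Y - N))"
proof (rule bij_betw_same_card[of "\<lambda>t. restrict (\<lambda>x. t x - card N) (Y - N)"])
  show "bij_betw (\<lambda>t. restrict (\<lambda>x. t x - card N) (Y - N)) (SYT_extending N F) (standard_fillings (Y - N))"
  proof (rule bij_betw_byWitness[where f' = "\<lambda>S. restrict (\<lambda>x. if x \<in> N then F x else S x + card N) Y"])
    show "\<forall>t\<in>SYT_extending N F. restrict (\<lambda>x. if x \<in> N then F x else
        restrict (\<lambda>x. t x - card N) (Y - N) x + card N) Y = t"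
    proof
      fix t assume t: "t \<in> SYT_extending N F"
      have "t \<in> extensional Y" using t by (simp add: SYT_extending_def SYT_def tableaux_def)
      then show "restrict (\<lambda>x. if x \<in> N then F x else
          restrict (\<lambda>x. t x - card N) (Y - N) x + card N) Y = t"
        using t SYT_extending_above[OF t] by (force simp: fun_eq_iff SYT_extending_def extensional_def)
    qed
    show "\<forall>S\<in>standard_fillings (Y - N). restrict (\<lambda>x. restrict (\<lambda>x. if x \<in> N then F x else
        S x + card N) Y x - card N) (Y - N) = S"
      by (auto simp: fun_eq_iff standard_fillings_def extensional_def)
  qed (use skew_part_standard glue_SYT in auto)
qed

end

definition initial_cells :: "((nat \<times> nat) \<Rightarrow> nat) \<Rightarrow> nat \<Rightarrow> (nat \<times> nat) list" where
  "initial_cells t m = map (cell t) [1..<Suc m]"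

lemma SYT_initial_cells_eq:
  assumes len: "length ps \<le> n" and ps: "distinct ps" "set ps \<subseteq> Y"
  shows "{t \<in> SYT. initial_cells t (length ps) = ps} = SYT_extending (set ps) (list_filling ps)"
proof -
  have "initial_cells t (length ps) = ps \<longleftrightarrow> (\<forall>x\<in>set ps. t x = list_filling ps x)" if t: "t \<in> T" for t
  proof -
    have "initial_cells t (length ps) = ps \<longleftrightarrow> (\<forall>i<length ps. cell t (Suc i) = ps ! i)"
      unfolding initial_cells_def list_eq_iff_nth_eq by (simp del: upt_Suc)
    also have "\<dots> \<longleftrightarrow> (\<forall>i<length ps. t (ps ! i) = Suc i)"
    proof (intro iffI allI impI)
      fix i assume H: "\<forall>i<length ps. cell t (Suc i) = ps ! i" and i: "i < length ps"
      have "Suc i \<in> {1..n}" using i len by simp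
      then show "t (ps ! i) = Suc i" using H i cell_in(2)[OF t] by metis
    next
      fix i assume H: "\<forall>i<length ps. t (ps ! i) = Suc i" and i: "i < length ps"
      have "ps ! i \<in> Y" using ps(2) nth_mem[OF i] by blast
      then show "cell t (Suc i) = ps ! i" using cell_eqI[OF t] H i by simp
    qed
    also have "\<dots> \<longleftrightarrow> (\<forall>x\<in>set ps. t x = list_filling ps x)"
    proof
      assume H: "\<forall>i<length ps. t (ps ! i) = Suc i"
      show "\<forall>x\<in>set ps. t x = list_filling ps x"
      proof
        fix x assume "x \<in> set ps"
        then obtain i where "i < length ps" "x = ps ! i" by (metis in_set_conv_nth)
        then show "t x = list_filling ps x" using H list_filling_nth[OF ps(1)] by simp
      qed
    next
      assume H: "\<forall>x\<in>set ps. t x = list_filling ps x"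
      show "\<forall>i<length ps. t (ps ! i) = Suc i" using H list_filling_nth[OF ps(1)] by simp
    qed
    finally show ?thesis .
  qed
  then show ?thesis by (auto simp: SYT_extending_def SYT_def)
qed

lemma card_SYT_initial_cells:
  assumes m: "length ps = m" "m \<le> n" and mu: "is_partition m mu" and cells_mu: "set ps = cells mu"
    and ps: "distinct ps" "sorted_wrt (\<lambda>x y. \<not> (fst y \<le> fst x \<and> snd y \<le> snd x)) ps"
  shows "card {t \<in> SYT. initial_cells t m = ps} = f_skew lam mu"
proof (cases "cells mu \<subseteq> Y")
  case True
  have len: "length ps \<le> n" using m by simp
  interpret mu: partition_shape m mu by (rule partition_shape.intro[OF mu])
  have "card (SYT_extending (set ps) (list_filling ps)) = card (standard_fillings (Y - set ps))"
    using True cells_mu mu.diagram_down_closed list_filling_standard[OF ps]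
    by (intro card_SYT_extending) auto
  then show ?thesis
    using SYT_initial_cells_eq[OF len ps(1)] True cells_mu m(1) by (simp add: f_skew_def)
next
  case False
  have "{t \<in> SYT. initial_cells t m = ps} = {}"
  proof (intro equals0I)
    fix t assume "t \<in> {t \<in> SYT. initial_cells t m = ps}"
    then have t: "t \<in> T" and eq: "map (cell t) [1..<Suc (length ps)] = ps"
      using m(1) by (auto simp: SYT_def initial_cells_def simp del: upt_Suc)
    have "set ps = cell t ` {1..length ps}"
      using arg_cong[OF eq, of set] by (simp add: atLeastLessThanSuc_atLeastAtMost del: upt_Suc)
    then have "set ps \<subseteq> Y" using cell_in(1)[OF t] m by auto
    with False cells_mu show False by simp
  qed
  then show ?thesis using False by (simp only: f_skew_def card.empty if_False)
qed

lemma addable_initial_cells: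
  assumes t: "t \<in> SYT" and k: "Suc k \<le> n"
  shows "addable (set (initial_cells t k)) (cell t (Suc k))"
proof -
  have tT: "t \<in> T" and ci: "col_increasing t" and ri: "row_increasing t" using t by (auto simp: SYT_def)
  have kn: "Suc k \<in> {1..n}" using k by simp
  have set_init: "set (initial_cells t k) = cell t ` {1..k}"
    by (simp add: initial_cells_def atLeastLessThanSuc_atLeastAtMost del: upt_Suc)
  obtain i j where ij: "cell t (Suc k) = (i, j)" by (cases "cell t (Suc k)")
  have inY: "(i, j) \<in> Y" and tk: "t (i, j) = Suc k" using cell_in[OF tT kn] ij by auto
  have earlier: "c \<in> cell t ` {1..k}" if c: "c \<in> Y" and less: "t c < Suc k" for c
  proof (rule image_eqI)
    show "c = cell t (t c)" using cell_tableau[OF tT c] by simp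
    show "t c \<in> {1..k}" using tableau_in_range[OF tT c] less by simp
  qed
  have "(i, j) \<notin> cell t ` {1..k}"
  proof
    assume "(i, j) \<in> cell t ` {1..k}"
    then obtain k' where "k' \<in> {1..k}" "cell t k' = (i, j)" by auto
    then show False using cell_in(2)[OF tT, of k'] tk k by auto
  qed
  moreover have "(i - 1, j) \<in> cell t ` {1..k}" if "0 < i"
  proof (rule earlier)
    show "(i - 1, j) \<in> Y" using diagram_down_closed[OF inY, of "i - 1" j] by simp
    then show "t (i - 1, j) < Suc k" using ci inY that tk unfolding col_increasing_def by force
  qed
  moreover have "(i, j - 1) \<in> cell t ` {1..k}" if "0 < j"
  proof (rule earlier)
    show "(i, j - 1) \<in> Y" using diagram_down_closed[OF inY, of i "j - 1"] by simp
    then show "t (i, j - 1) < Suc k" using ri inY that tk unfolding row_increasing_def by force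
  qed
  ultimately show ?thesis by (simp add: addable_def ij set_init)
qed

lemma initial_cells_step:
  assumes "t \<in> SYT" "Suc k \<le> n"
  shows "\<exists>x. initial_cells t (Suc k) = initial_cells t k @ [x] \<and> addable (set (initial_cells t k)) x
    \<and> (x = (0, 0) \<or> (\<exists>(i, j)\<in>set (initial_cells t k). x = (Suc i, j) \<or> x = (i, Suc j)))"
  using addable_initial_cells[OF assms] addable_cases[OF addable_initial_cells[OF assms]]
  by (auto simp: initial_cells_def)

lemma initial_cells_2:
  assumes t: "t \<in> SYT" and n: "2 \<le> n"
  shows "initial_cells t 2 \<in> {[(0, 0), (0, 1)], [(0, 0), (1, 0)]}"
proof -
  have "initial_cells t 1 = [(0, 0)]"
    using initial_cells_step[OF t, of 0] n by (auto simp: addable_def initial_cells_def)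
  then show ?thesis using initial_cells_step[OF t, of 1] n by (auto simp: addable_def numeral_2_eq_2)
qed

lemma initial_cells_4:
  assumes t: "t \<in> SYT" and n: "4 \<le> n"
  shows "initial_cells t 4 \<in> {[(0, 0), (0, 1), (0, 2), (0, 3)], [(0, 0), (0, 1), (0, 2), (1, 0)],
    [(0, 0), (0, 1), (1, 0), (0, 2)], [(0, 0), (1, 0), (0, 1), (0, 2)],
    [(0, 0), (0, 1), (1, 0), (1, 1)], [(0, 0), (1, 0), (0, 1), (1, 1)],
    [(0, 0), (0, 1), (1, 0), (2, 0)], [(0, 0), (1, 0), (0, 1), (2, 0)],
    [(0, 0), (1, 0), (2, 0), (0, 1)], [(0, 0), (1, 0), (2, 0), (3, 0)]}"
proof -
  have "initial_cells t 2 \<in> {[(0, 0), (0, 1)], [(0, 0), (1, 0)]}" using initial_cells_2 t n by simp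
  then have "initial_cells t 3 \<in> {[(0, 0), (0, 1), (0, 2)], [(0, 0), (0, 1), (1, 0)],
      [(0, 0), (1, 0), (0, 1)], [(0, 0), (1, 0), (2, 0)]}"
    using initial_cells_step[OF t, of 2] n by (auto simp: addable_def)
  then show ?thesis using initial_cells_step[OF t, of 3] n by (auto simp: addable_def)
qed

lemma card_SYT_initial_cells_in:
  assumes "finite Q"
  shows "card {t \<in> SYT. initial_cells t m \<in> Q} = (\<Sum>ps\<in>Q. card {t \<in> SYT. initial_cells t m = ps})"
proof -
  have "{t \<in> SYT. initial_cells t m \<in> Q} = (\<Union>ps\<in>Q. {t \<in> SYT. initial_cells t m = ps})" by blast
  also have "card \<dots> = (\<Sum>ps\<in>Q. card {t \<in> SYT. initial_cells t m = ps})"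
    by (rule card_UN_disjoint) (use assms finite_SYT in auto)
  finally show ?thesis .
qed

lemma initial_cells_2_eq: "initial_cells t 2 = [cell t 1, cell t 2]"
  by (simp add: initial_cells_def numeral_2_eq_2)

lemma initial_cells_4_eq: "initial_cells t 4 = [cell t 1, cell t 2, cell t 3, cell t 4]"
  by (simp add: initial_cells_def eval_nat_numeral)

lemma initial_cells_4_cells:
  assumes "initial_cells t 4 = [a, b, c, d]"
  shows "cell t 1 = a" "cell t 2 = b" "cell t 3 = c" "cell t 4 = d"
  using assms by (simp_all add: initial_cells_4_eq)

theorem specht_char_s1:
  assumes n: "2 \<le> n"
  shows "specht_char n lam id - specht_char n lam s1 = 2 * real (f_skew lam [1, 1])"
proof -
  define Jp where "Jp = {t \<in> SYT. initial_cells t 2 = [(0, 0), (0, 1)]}"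
  define Jm where "Jm = {t \<in> SYT. initial_cells t 2 = [(0, 0), (1, 0)]}"
  have s1_2: "s1 permutes {1..2}" by (simp add: s1_eq_transpose permutes_swap_id)
  have "card SYT = card {t \<in> SYT. initial_cells t 2 \<in> {[(0, 0), (0, 1)], [(0, 0), (1, 0)]}}"
    using initial_cells_2 n by (intro arg_cong[where f = card]) auto
  then have card: "card Jp + card Jm = card SYT"
    using card_SYT_initial_cells_in[of "{[(0, 0), (0, 1)], [(0, 0), (1, 0)]}" 2]
    by (simp add: Jp_def Jm_def)
  have s1_s1: "s1 \<circ> s1 = id" by (simp add: fun_eq_iff)
  have "leading_tabloid (sym_polytabloid s1 1 t) (tab t)" if "t \<in> Jp" for t
  proof -
    have "cell t 1 = (0, 0)" "cell t 2 = (0, 1)" using that by (simp_all add: Jp_def initial_cells_2_eq)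
    then show ?thesis
      by (intro leading_tabloid_sym_polytabloid[of t 2 s1 s1])
         (use that n s1_2 s1_s1 in \<open>auto simp: Jp_def col_def row_def s1_apply upt_rec
            eval_nat_numeral atLeastAtMostSuc_conv simp del: atLeastAtMost_iff\<close>)
  qed
  moreover have "leading_tabloid (sym_polytabloid s1 (-1) t) (tab t)" if "t \<in> Jm" for t
  proof -
    have "cell t 1 = (0, 0)" "cell t 2 = (1, 0)" using that by (simp_all add: Jm_def initial_cells_2_eq)
    then show ?thesis
      by (intro leading_tabloid_sym_polytabloid[of t 2 s1 id])
         (use that n s1_2 in \<open>auto simp: Jm_def col_def row_def sign_s1 s1_apply upt_rec
            eval_nat_numeral atLeastAtMostSuc_conv simp del: atLeastAtMost_iff\<close>)
  qed
  moreover have "s1 permutes {1..n}" using permutes_subset[OF s1_2] n by simp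
  ultimately have "specht_char n lam s1 = real (card Jp) - real (card Jm)"
    and "specht_char n lam id = real (card SYT)"
    using specht_char_involution[of s1 Jp Jm] card by (auto simp: Jp_def Jm_def)
  moreover have "card Jm = f_skew lam [1, 1]" unfolding Jm_def
    by (rule card_SYT_initial_cells) (use n in \<open>auto simp: is_partition_def cells_def less_Suc_eq\<close>)
  ultimately show ?thesis using card by simp
qed

text \<open>For \<open>s\<^sub>1 s\<^sub>3\<close> the partner \<open>\<rho>\<close> drops each of the two transpositions whose entries share a
  column.  The classes \<open>124/3\<close> and \<open>14/2/3\<close> get no eigenvector of their own; the classes
  \<open>123/4\<close> and \<open>13/2/4\<close>, which have the same size, carry one for each sign instead.\<close>

theorem specht_char_s1_s3:
  assumes n: "4 \<le> n"
  shows "specht_char n lam id - specht_char n lam (s1 \<circ> s3)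
    = 4 * (real (f_skew lam [3, 1]) + real (f_skew lam [2, 1, 1]))"
proof -
  define r4 :: "(nat \<times> nat) list" where "r4 = [(0, 0), (0, 1), (0, 2), (0, 3)]"
  define a31 :: "(nat \<times> nat) list" where "a31 = [(0, 0), (0, 1), (0, 2), (1, 0)]"
  define b31 :: "(nat \<times> nat) list" where "b31 = [(0, 0), (0, 1), (1, 0), (0, 2)]"
  define c31 :: "(nat \<times> nat) list" where "c31 = [(0, 0), (1, 0), (0, 1), (0, 2)]"
  define a22 :: "(nat \<times> nat) list" where "a22 = [(0, 0), (0, 1), (1, 0), (1, 1)]"
  define b22 :: "(nat \<times> nat) list" where "b22 = [(0, 0), (1, 0), (0, 1), (1, 1)]"
  define a211 :: "(nat \<times> nat) list" where "a211 = [(0, 0), (0, 1), (1, 0), (2, 0)]"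
  define b211 :: "(nat \<times> nat) list" where "b211 = [(0, 0), (1, 0), (0, 1), (2, 0)]"
  define c211 :: "(nat \<times> nat) list" where "c211 = [(0, 0), (1, 0), (2, 0), (0, 1)]"
  define c4 :: "(nat \<times> nat) list" where "c4 = [(0, 0), (1, 0), (2, 0), (3, 0)]"
  note lists = r4_def a31_def b31_def c31_def a22_def b22_def a211_def b211_def c211_def c4_def
  define N where "N ps = card {t \<in> SYT. initial_cells t 4 = ps}" for ps
  define Jp where "Jp = {t \<in> SYT. initial_cells t 4 \<in> {r4, a31, a22, b22, b211, c4}}"
  define Jm where "Jm = {t \<in> SYT. initial_cells t 4 \<in> {a31, c31, a211, b211}}"
  have count_31: "N a31 = f_skew lam [3, 1]" "N b31 = f_skew lam [3, 1]" "N c31 = f_skew lam [3, 1]"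
    and count_211: "N a211 = f_skew lam [2, 1, 1]" "N b211 = f_skew lam [2, 1, 1]"
      "N c211 = f_skew lam [2, 1, 1]"
    unfolding N_def lists
    by (rule card_SYT_initial_cells;
        use n in \<open>auto simp: is_partition_def cells_def less_Suc_eq nth_Cons' eval_nat_numeral\<close>)+
  have "card SYT = card {t \<in> SYT. initial_cells t 4 \<in> {r4, a31, b31, c31, a22, b22, a211, b211, c211, c4}}"
    using initial_cells_4 n by (intro arg_cong[where f = card]) (auto simp: lists)
  then have card: "card Jp + card Jm = card SYT"
    and card_Jm: "card Jm = 2 * f_skew lam [3, 1] + 2 * f_skew lam [2, 1, 1]"
    using count_31 count_211
      card_SYT_initial_cells_in[of "{r4, a31, b31, c31, a22, b22, a211, b211, c211, c4}" 4]
      card_SYT_initial_cells_in[of "{r4, a31, a22, b22, b211, c4}" 4]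
      card_SYT_initial_cells_in[of "{a31, c31, a211, b211}" 4]
    by (simp_all add: Jp_def Jm_def N_def lists)
  have perms: "s1 permutes {1..4}" "s3 permutes {1..4}" "s1 \<circ> s3 permutes {1..4}"
    by (simp_all add: s1_eq_transpose s3_eq_transpose permutes_swap_id permutes_compose)
  have invol: "(s1 \<circ> s3) ((s1 \<circ> s3) k) = k" for k by (simp add: s1_apply s3_apply)
  have comps: "s1 \<circ> s3 \<circ> (s1 \<circ> s3) = id" "s1 \<circ> s3 \<circ> s3 = s1" "s1 \<circ> s3 \<circ> s1 = s3"
    by (auto simp: fun_eq_iff s1_apply s3_apply)
  have sign_s1_s3: "sign (s1 \<circ> s3) = 1"
    by (simp add: s1_eq_transpose s3_eq_transpose sign_compose permutation_swap_id sign_swap_id)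
  note small = perms comps sign_s1 sign_s3 sign_s1_s3 n
  note small_simps = col_def row_def s1_apply s3_apply upt_rec eval_nat_numeral atLeastAtMostSuc_conv
  note lead = leading_tabloid_sym_polytabloid[of _ 4 "s1 \<circ> s3"]
  have "leading_tabloid (sym_polytabloid (s1 \<circ> s3) 1 t) (tab t)" if t: "t \<in> Jp" for t
  proof -
    consider (r4) "initial_cells t 4 = r4" | (a31) "initial_cells t 4 = a31"
      | (a22) "initial_cells t 4 = a22" | (b22) "initial_cells t 4 = b22"
      | (b211) "initial_cells t 4 = b211" | (c4) "initial_cells t 4 = c4"
      using t by (auto simp: Jp_def)
    then show ?thesis
    proof cases
      case r4
      note c = initial_cells_4_cells[OF r4[unfolded lists]]
      show ?thesis by (intro lead[where \<rho> = "s1 \<circ> s3"])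
          (use t c small in \<open>auto simp: Jp_def small_simps simp del: atLeastAtMost_iff\<close>)
    next
      case a31
      note c = initial_cells_4_cells[OF a31[unfolded lists]]
      show ?thesis by (intro lead[where \<rho> = "s1 \<circ> s3"])
          (use t c small in \<open>auto simp: Jp_def small_simps simp del: atLeastAtMost_iff\<close>)
    next
      case a22
      note c = initial_cells_4_cells[OF a22[unfolded lists]]
      show ?thesis by (intro lead[where \<rho> = "s1 \<circ> s3"])
          (use t c small in \<open>auto simp: Jp_def small_simps simp del: atLeastAtMost_iff\<close>)
    next
      case b22
      note c = initial_cells_4_cells[OF b22[unfolded lists]]
      show ?thesis by (intro lead[where \<rho> = id])
          (use t c small in \<open>auto simp: Jp_def small_simps simp del: atLeastAtMost_iff\<close>)
    next
      case b211
      note c = initial_cells_4_cells[OF b211[unfolded lists]]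
      show ?thesis by (intro lead[where \<rho> = s3])
          (use t c small in \<open>auto simp: Jp_def small_simps simp del: atLeastAtMost_iff\<close>)
    next
      case c4
      note c = initial_cells_4_cells[OF c4[unfolded lists]]
      show ?thesis by (intro lead[where \<rho> = id])
          (use t c small in \<open>auto simp: Jp_def small_simps simp del: atLeastAtMost_iff\<close>)
    qed
  qed
  moreover have "leading_tabloid (sym_polytabloid (s1 \<circ> s3) (-1) t) (tab t)" if t: "t \<in> Jm" for t
  proof -
    consider (a31) "initial_cells t 4 = a31" | (c31) "initial_cells t 4 = c31"
      | (a211) "initial_cells t 4 = a211" | (b211) "initial_cells t 4 = b211"
      using t by (auto simp: Jm_def)
    then show ?thesis
    proof cases
      case a31
      note c = initial_cells_4_cells[OF a31[unfolded lists]]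
      show ?thesis by (intro lead[where \<rho> = "s1 \<circ> s3"])
          (use t c small in \<open>auto simp: Jm_def small_simps simp del: atLeastAtMost_iff\<close>)
    next
      case c31
      note c = initial_cells_4_cells[OF c31[unfolded lists]]
      show ?thesis by (intro lead[where \<rho> = s3])
          (use t c small in \<open>auto simp: Jm_def small_simps simp del: atLeastAtMost_iff\<close>)
    next
      case a211
      note c = initial_cells_4_cells[OF a211[unfolded lists]]
      show ?thesis by (intro lead[where \<rho> = s1])
          (use t c small in \<open>auto simp: Jm_def small_simps simp del: atLeastAtMost_iff\<close>)
    next
      case b211
      note c = initial_cells_4_cells[OF b211[unfolded lists]]
      show ?thesis by (intro lead[where \<rho> = s3])
          (use t c small in \<open>auto simp: Jm_def small_simps simp del: atLeastAtMost_iff\<close>)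
    qed
  qed
  moreover have "s1 \<circ> s3 permutes {1..n}" using permutes_subset[OF perms(3)] n by simp
  ultimately have "specht_char n lam (s1 \<circ> s3) = real (card Jp) - real (card Jm)"
    and "specht_char n lam id = real (card SYT)"
    using specht_char_involution[of "s1 \<circ> s3" Jp Jm] card invol by (auto simp: Jp_def Jm_def)
  then show ?thesis using card card_Jm by simp
qed

end

theorem proposition3p7:
  fixes n :: nat and lam :: "nat list"
  assumes "n \<ge> 4" and "is_partition n lam"
  shows "(specht_char n lam id - specht_char n lam s1) / 2 = real (f_skew lam [1, 1])
       \<and> (specht_char n lam id - specht_char n lam (s1 \<circ> s3)) / 2
             = 2 * (real (f_skew lam [3, 1]) + real (f_skew lam [2, 1, 1]))"
proof -
  interpret partition_shape n lam by (rule partition_shape.intro[OF assms(2)])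
  show ?thesis using specht_char_s1 specht_char_s1_s3 assms(1) by simp
qed

end
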